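(* Let $q\ge 1$ and let $P\in\mathcal{P}_q$ be a probability measure on $\mathbb{R}^D$. For a sequence of probability measures $Q_1,Q_2,\dots\in\mathcal{P}_q$, the following are equivalent: (a) $d_{\mathcal{F}_q}(Q_n,P)\to 0$ as $n\to\infty$; (b) $Q_n$ converges weakly to $P$ and $\mathbb{E}_{X\sim Q_n}[\|X\|_2^q]\to\mathbb{E}_{X\sim P}[\|X\|_2^q]$ as $n\to\infty$.
   Context: $\|\cdot\|_2$ is the Euclidean norm. For a real tensor $T$ of order $L$, $\|T\|_{\mathrm{op}}=\sup_{\|u^{(l)}\|_2=1}|\langle T,u^{(1)}\otimes\cdots\otimes u^{(L)}\rangle|$ (for vectors this is the Euclidean norm). $\nabla^i f$ denotes the tensor of $i$-th order partial derivatives. A function $h:\mathbb{R}^D\to\mathbb{R}$ is pseudo-Lipschitz of order $r\ge 0$ if there is $C>0$ with $|h(x)-h(y)|\le C(1+\|x\|_2^r+\|y\|_2^r)\|x-y\|_2$ for all $x,y$; the smallest such $C$ is denoted $\tilde\mu_{\mathrm{pLip}}(h)_{1,r}$. Define $\mathcal{F}_q=\{f:\mathbb{R}^D\to\mathbb{R}:\ f\in C^3,\ \tilde\mu_{\mathrm{pLip}}(f)_{1,q-1}\le 1,\ \sup_x\|\nabla^i f(x)\|_{\mathrm{op}}/(1+\|x\|_2^{q-1})\le 1 \text{ for } i\in\{2,3\}\}$ and $d_{\mathcal{F}_q}(P,Q)=\sup_{f\in\mathcal{F}_q}|\mathbb{E}_{X\sim P}[f(X)]-\mathbb{E}_{Y\sim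 Q}[f(Y)]|$. $\mathcal{P}_q$ is the set of probability measures $\mu$ on $\mathbb{R}^D$ with $\int\|x\|_2^q\,d\mu(x)<\infty$. *)

theory Defs
  imports "HOL-Analysis.Analysis" "HOL-Probability.Probability"
begin

text \<open>Power t^r for t \<ge> 0 and real r \<ge> 0, with the usual convention 0^0 = 1
  (Isabelle's powr has 0 powr 0 = 0).\<close>
definition npow :: "real \<Rightarrow> real \<Rightarrow> real" where
  "npow t r = (if t = 0 then (if r = 0 then 1 else 0) else t powr r)"

definition pseudo_lipschitz :: "real \<Rightarrow> real \<Rightarrow> ('a::real_normed_vector \<Rightarrow> real) \<Rightarrow> bool" where
  "pseudo_lipschitz r C h \<longleftrightarrow>
     (\<forall>x y. \<bar>h x - h y\<bar> \<le> C * (1 + npow (norm x) r + npow (norm y) r) * norm (x - y))"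

text \<open>The class F_q.  f is C^3 with derivatives f1, f2, f3 (as nested bounded linear maps;
  the norm of the nested bounded linear map f_i x is exactly the operator norm of the
  tensor of i-th partial derivatives).  The condition that the smallest pseudo-Lipschitz
  constant of order q-1 is at most 1 is equivalent to the inequality holding with C = 1.\<close>
definition F_class :: "real \<Rightarrow> ('a::euclidean_space \<Rightarrow> real) set" where
  "F_class q = {f. \<exists>(f1 :: 'a \<Rightarrow> ('a \<Rightarrow>\<^sub>L real)) f2 f3.
        (\<forall>x. (f has_derivative blinfun_apply (f1 x)) (at x)) \<and>
        (\<forall>x. (f1 has_derivative blinfun_apply (f2 x)) (at x)) \<and>
        (\<forall>x. (f2 has_derivative blinfun_apply (f3 x)) (at x)) \<and>
        continuous_on UNIV f3 \<and>
        pseudo_lipschitz (q - 1) 1 f \<and>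
        (\<forall>x. norm (f2 x) \<le> 1 + npow (norm x) (q - 1)) \<and>
        (\<forall>x. norm (f3 x) \<le> 1 + npow (norm x) (q - 1))}"

definition d_F :: "real \<Rightarrow> 'a::euclidean_space measure \<Rightarrow> 'a measure \<Rightarrow> real" where
  "d_F q P Q = (SUP f \<in> F_class q. \<bar>(\<integral>x. f x \<partial>P) - (\<integral>y. f y \<partial>Q)\<bar>)"

definition P_class :: "real \<Rightarrow> ('a::euclidean_space) measure set" where
  "P_class q = {M. prob_space M \<and> sets M = sets borel \<and>
                   integrable M (\<lambda>x. norm x powr q)}"

definition weak_conv :: "(nat \<Rightarrow> 'a::topological_space measure) \<Rightarrow> 'a measure \<Rightarrow> bool" where
  "weak_conv Q P \<longleftrightarrow> (\<forall>f :: 'a \<Rightarrow> real. continuous_on UNIV f \<and> bounded (range f) \<longrightarrow>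
       (\<lambda>n. \<integral>x. f x \<partial>Q n) \<longlonglongrightarrow> (\<integral>x. f x \<partial>P))"

end

theory Submission
  imports Defs
begin

text \<open>For a profile \<psi> on the line whose first three derivatives grow at most like |s|^(q-1), the
  ridge function x \<mapsto> c * \<psi> (t \<bullet> x) lies in F_q for small c > 0.  So d_F convergence gives
  convergence of the integrals of trigonometric polynomials, of the coordinate tails
  \<Sum>_b \<psi>(x_b / L) with \<psi>(y) = y^2 / (1 + y^2), and of \<Sum>_b (1 + x_b^2)^(q/2), which is comparable
  to 1 + |x|^q.  The coordinate tails give tightness; on a large box a bounded continuous function
  is a continuous function of the sine chart x \<mapsto> (sin (\<pi> x_b / 2L))_b, hence by Stone-Weierstrass
  nearly a trigonometric polynomial, and weak convergence follows.  Weak convergence together with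
  the convergence of \<Sum>_b (1 + x_b^2)^(q/2) makes the tails of |x|^q uniformly small, which gives
  convergence of the q-th moments.

  Conversely, weak convergence and convergence of q-th moments make the tails of |x|^q uniformly
  small.  Cutting f \<in> F_q off outside a large ball changes its integrals by at most three such
  tails, and the cut-off functions form a uniformly bounded family, equi-Lipschitz on the ball and
  vanishing outside it, hence with a finite uniform e-net on which weak convergence is uniform.\<close>

lemma npow_nonneg: "0 \<le> npow t r"
  by (simp add: npow_def)

lemma npow_mono: "0 \<le> a \<Longrightarrow> a \<le> b \<Longrightarrow> 0 \<le> r \<Longrightarrow> npow a r \<le> npow b r"
  by (auto simp: npow_def powr_mono2)

lemma npow_mult: "0 \<le> a \<Longrightarrow> 0 \<le> b \<Longrightarrow> 0 \<le> r \<Longrightarrow> npow (a * b) r = npow a r * npow b r"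
  by (auto simp: npow_def powr_mult)

lemma npow_eq_powr: "0 < r \<Longrightarrow> npow t r = t powr r"
  by (simp add: npow_def)

lemma npow_norm_mult_norm: "0 \<le> r \<Longrightarrow> npow (norm x) r * norm x = norm x powr (r + 1)"
  by (cases "x = 0") (simp_all add: npow_def powr_add)

lemma norm_le_one_plus_norm_powr:
  assumes "1 \<le> q" shows "norm x \<le> 1 + norm x powr q"
proof (cases "norm x \<le> 1")
  case True
  moreover have "0 \<le> norm x powr q" by simp
  ultimately show ?thesis by linarith
next
  case False
  then have "norm x powr 1 \<le> norm x powr q" using assms by (intro powr_mono) auto
  then show ?thesis using False by simp
qed

lemma continuous_on_norm_powr: "0 < q \<Longrightarrow> continuous_on UNIV (\<lambda>x::'a::real_normed_vector. norm x powr q)"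
  by (intro continuous_on_powr' continuous_intros) auto

lemma P_classD:
  assumes "M \<in> P_class q"
  shows "prob_space M" "sets M = sets borel" "integrable M (\<lambda>x. norm x powr q)"
  using assms by (simp_all add: P_class_def)

lemma P_class_borel_measurable:
  "M \<in> P_class q \<Longrightarrow> continuous_on UNIV f \<Longrightarrow> f \<in> borel_measurable M"
  using borel_measurable_continuous_onI measurable_cong_sets[OF P_classD(2) refl] by blast

lemma P_class_integrable_dominated:
  fixes f :: "'a::euclidean_space \<Rightarrow> real"
  assumes M: "M \<in> P_class q" and f: "continuous_on UNIV f"
    and bound: "\<And>x. \<bar>f x\<bar> \<le> a + b * norm x powr q"
  shows "integrable M f"
proof -
  interpret prob_space M by (rule P_classD(1)[OF M])
  have "integrable M (\<lambda>x. a + b * norm x powr q)"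
    using P_classD(3)[OF M] by simp
  then show ?thesis
    by (rule Bochner_Integration.integrable_bound)
       (use P_class_borel_measurable[OF M f] bound in \<open>auto intro: order_trans[OF _ abs_ge_self]\<close>)
qed

lemma P_class_integrable_bounded:
  fixes f :: "'a::euclidean_space \<Rightarrow> real"
  shows "M \<in> P_class q \<Longrightarrow> continuous_on UNIV f \<Longrightarrow> (\<And>x. \<bar>f x\<bar> \<le> a) \<Longrightarrow> integrable M f"
  by (rule P_class_integrable_dominated[where b = 0]) auto

lemma F_class_continuous: "f \<in> F_class q \<Longrightarrow> continuous_on UNIV f"
  unfolding F_class_def
  by (auto intro!: continuous_at_imp_continuous_on dest: has_derivative_continuous)

lemma F_class_pseudo_lipschitz:
  "f \<in> F_class q \<Longrightarrow> \<bar>f x - f y\<bar> \<le> (1 + npow (norm x) (q - 1) + npow (norm y) (q - 1)) * norm (x - y)"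
  unfolding F_class_def pseudo_lipschitz_def by auto

lemma F_class_growth:
  assumes f: "f \<in> F_class q" and q: "1 \<le> q"
  shows "\<bar>f x - f 0\<bar> \<le> 2 * norm x + norm x powr q"
proof -
  have "\<bar>f x - f 0\<bar> \<le> (1 + npow (norm x) (q - 1) + npow 0 (q - 1)) * norm x"
    using F_class_pseudo_lipschitz[OF f, of x 0] by simp
  also have "\<dots> \<le> norm x + norm x powr q + 1 * norm x"
    using npow_norm_mult_norm[of "q - 1" x] q
    by (simp add: distrib_right) (auto simp: npow_def)
  finally show ?thesis by simp
qed

lemma F_class_integrable:
  fixes f :: "'a::euclidean_space \<Rightarrow> real"
  assumes f: "f \<in> F_class q" and q: "1 \<le> q" and M: "M \<in> P_class q"
  shows "integrable M f"
proof (rule P_class_integrable_dominated[OF M F_class_continuous[OF f]])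
  fix x :: 'a
  show "\<bar>f x\<bar> \<le> (\<bar>f 0\<bar> + 2) + 3 * norm x powr q"
    using F_class_growth[OF f q, of x] norm_le_one_plus_norm_powr[OF q, of x] by linarith
qed

lemma zero_in_F_class: "(\<lambda>x. 0) \<in> F_class q"
  unfolding F_class_def pseudo_lipschitz_def
  by (intro CollectI exI[of _ "\<lambda>x. 0"]) (auto simp: zero_blinfun.rep_eq add_nonneg_nonneg npow_nonneg)

lemma integral_F_class_minus_value_at_0:
  fixes f :: "'a::euclidean_space \<Rightarrow> real"
  assumes f: "f \<in> F_class q" and q: "1 \<le> q" and M: "M \<in> P_class q"
  shows "\<bar>(\<integral>x. f x \<partial>M) - f 0\<bar> \<le> (\<integral>x. 2 * norm x + norm x powr q \<partial>M)"
proof -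
  interpret prob_space M by (rule P_classD(1)[OF M])
  have fi: "integrable M f" by (rule F_class_integrable[OF f q M])
  have Gi: "integrable M (\<lambda>x. 2 * norm x + norm x powr q)"
  proof (rule P_class_integrable_dominated[OF M])
    show "continuous_on UNIV (\<lambda>x. 2 * norm x + norm x powr q)"
      using q by (intro continuous_intros continuous_on_norm_powr) auto
    show "\<bar>2 * norm x + norm x powr q\<bar> \<le> 2 + 3 * norm x powr q" for x
      using norm_le_one_plus_norm_powr[OF q, of x] by simp
  qed
  have "(\<integral>x. f x \<partial>M) - f 0 = (\<integral>x. f x - f 0 \<partial>M)"
    using fi by (simp add: prob_space)
  also have "\<bar>\<dots>\<bar> \<le> (\<integral>x. \<bar>f x - f 0\<bar> \<partial>M)"
    by (rule integral_abs_bound)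
  also have "\<dots> \<le> (\<integral>x. 2 * norm x + norm x powr q \<partial>M)"
    using fi Gi F_class_growth[OF f q] by (intro integral_mono) auto
  finally show ?thesis .
qed

lemma d_F_ge:
  fixes Q P :: "'a::euclidean_space measure"
  assumes f: "f \<in> F_class q" and q: "1 \<le> q" and Q: "Q \<in> P_class q" and P: "P \<in> P_class q"
  shows "\<bar>(\<integral>x. f x \<partial>Q) - (\<integral>x. f x \<partial>P)\<bar> \<le> d_F q Q P"
  unfolding d_F_def
proof (rule cSUP_upper[OF f], rule bdd_aboveI2)
  fix g :: "'a \<Rightarrow> real" assume "g \<in> F_class q"
  from integral_F_class_minus_value_at_0[OF this q Q] integral_F_class_minus_value_at_0[OF this q P]
  show "\<bar>(\<integral>x. g x \<partial>Q) - (\<integral>x. g x \<partial>P)\<bar>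
      \<le> (\<integral>x. 2 * norm x + norm x powr q \<partial>Q) + (\<integral>x. 2 * norm x + norm x powr q \<partial>P)"
    by linarith
qed

lemma d_F_nonneg: "1 \<le> q \<Longrightarrow> Q \<in> P_class q \<Longrightarrow> P \<in> P_class q \<Longrightarrow> 0 \<le> d_F q Q P"
  using d_F_ge[OF zero_in_F_class] by fastforce

lemma d_F_le:
  "(\<And>f. f \<in> F_class q \<Longrightarrow> \<bar>(\<integral>x. f x \<partial>Q) - (\<integral>x. f x \<partial>P)\<bar> \<le> e) \<Longrightarrow> d_F q Q P \<le> e"
  unfolding d_F_def using zero_in_F_class by (intro cSUP_least) auto

lemma integral_tendsto_if_d_F_tendsto_0:
  assumes q: "1 \<le> q" and P: "P \<in> P_class q" and Q: "\<And>n. Q n \<in> P_class q"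
    and d: "(\<lambda>n. d_F q (Q n) P) \<longlonglongrightarrow> 0" and f: "f \<in> F_class q"
  shows "(\<lambda>n. \<integral>x. f x \<partial>Q n) \<longlonglongrightarrow> (\<integral>x. f x \<partial>P)"
proof -
  have "(\<lambda>n. (\<integral>x. f x \<partial>Q n) - (\<integral>x. f x \<partial>P)) \<longlonglongrightarrow> 0"
    by (rule Lim_null_comparison[OF _ d]) (use d_F_ge[OF f q Q P] in auto)
  then show ?thesis by (simp add: LIM_zero_iff)
qed

section \<open>Ridge functions in F_q\<close>

definition ridge_profile :: "real \<Rightarrow> (real \<Rightarrow> real) \<Rightarrow> bool" where
  "ridge_profile r \<psi> \<longleftrightarrow> (\<exists>\<psi>1 \<psi>2 \<psi>3 B.
     (\<forall>s. (\<psi> has_real_derivative \<psi>1 s) (at s)) \<and>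
     (\<forall>s. (\<psi>1 has_real_derivative \<psi>2 s) (at s)) \<and>
     (\<forall>s. (\<psi>2 has_real_derivative \<psi>3 s) (at s)) \<and> continuous_on UNIV \<psi>3 \<and>
     (\<forall>s. \<bar>\<psi>1 s\<bar> \<le> B * (1 + npow \<bar>s\<bar> r) \<and> \<bar>\<psi>2 s\<bar> \<le> B * (1 + npow \<bar>s\<bar> r) \<and>
          \<bar>\<psi>3 s\<bar> \<le> B * (1 + npow \<bar>s\<bar> r)))"

lemma ridge_profileI:
  assumes "\<And>s. (\<psi> has_real_derivative \<psi>' s) (at s)"
    and "\<And>s. (\<psi>' has_real_derivative \<psi>'' s) (at s)"
    and "\<And>s. (\<psi>'' has_real_derivative \<psi>''' s) (at s)"
    and "continuous_on UNIV \<psi>'''"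
    and "\<And>s. \<bar>\<psi>' s\<bar> \<le> B * (1 + npow \<bar>s\<bar> r)"
    and "\<And>s. \<bar>\<psi>'' s\<bar> \<le> B * (1 + npow \<bar>s\<bar> r)"
    and "\<And>s. \<bar>\<psi>''' s\<bar> \<le> B * (1 + npow \<bar>s\<bar> r)"
  shows "ridge_profile r \<psi>"
  unfolding ridge_profile_def using assms by blast

lemma abs_diff_le_if_deriv_growth:
  fixes \<psi> \<psi>' :: "real \<Rightarrow> real"
  assumes deriv: "\<And>s. (\<psi> has_real_derivative \<psi>' s) (at s)"
    and growth: "\<And>s. \<bar>\<psi>' s\<bar> \<le> B * (1 + npow \<bar>s\<bar> r)" and r: "0 \<le> r" and B: "0 \<le> B"
  shows "\<bar>\<psi> a - \<psi> b\<bar> \<le> B * (1 + npow \<bar>a\<bar> r + npow \<bar>b\<bar> r) * \<bar>a - b\<bar>"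
proof -
  have less: "\<bar>\<psi> a - \<psi> b\<bar> \<le> B * (1 + npow \<bar>a\<bar> r + npow \<bar>b\<bar> r) * \<bar>a - b\<bar>" if "a < b" for a b
  proof -
    obtain z where z: "a < z" "z < b" "\<psi> b - \<psi> a = (b - a) * \<psi>' z"
      using MVT2[OF \<open>a < b\<close>, of \<psi> \<psi>'] deriv by blast
    have "npow \<bar>z\<bar> r \<le> npow (max \<bar>a\<bar> \<bar>b\<bar>) r" using z r by (intro npow_mono) auto
    also have "\<dots> \<le> npow \<bar>a\<bar> r + npow \<bar>b\<bar> r"
      using npow_nonneg[of "\<bar>a\<bar>" r] npow_nonneg[of "\<bar>b\<bar>" r] by (simp add: max_def)
    finally have "\<bar>\<psi>' z\<bar> \<le> B * (1 + npow \<bar>a\<bar> r + npow \<bar>b\<bar> r)"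
      using growth[of z] B by (smt (verit) mult_left_mono)
    moreover have "\<psi> a - \<psi> b = \<psi>' z * (a - b)"
      using z(3) by (simp add: algebra_simps)
    then have "\<bar>\<psi> a - \<psi> b\<bar> = \<bar>\<psi>' z\<bar> * \<bar>a - b\<bar>"
      by (simp add: abs_mult)
    ultimately show ?thesis by (simp add: mult_right_mono)
  qed
  show ?thesis
    using less[of a b] less[of b a]
    by (cases a b rule: linorder_cases) (simp_all add: abs_minus_commute add_ac)
qed

lemma has_derivative_ridge:
  fixes C :: "'b::real_normed_vector" and t x :: "'a::real_inner"
  assumes "(\<phi> has_real_derivative D) (at (t \<bullet> x))"
  shows "((\<lambda>y. \<phi> (t \<bullet> y) *\<^sub>R C)
          has_derivative blinfun_apply (D *\<^sub>R (blinfun_scaleR_left C o\<^sub>L blinfun_inner_left t))) (at x)"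
proof -
  have "((\<lambda>y. \<phi> (t \<bullet> y)) has_derivative (\<lambda>v. D * (t \<bullet> v))) (at x)"
    using has_derivative_compose[OF has_derivative_inner_right[OF has_derivative_ident]] assms
    by (auto simp: has_field_derivative_def o_def)
  moreover have "blinfun_apply (D *\<^sub>R (blinfun_scaleR_left C o\<^sub>L blinfun_inner_left t))
      = (\<lambda>v. (D * (t \<bullet> v)) *\<^sub>R C)"
    by (simp add: fun_eq_iff blinfun.scaleR_left inner_commute)
  ultimately show ?thesis
    using has_derivative_scaleR_left by fastforce
qed

lemma norm_blinfun_scaleR_left_compose_inner_left_le:
  fixes t :: "'a::real_inner"
  assumes "norm C \<le> c * norm t ^ k"
  shows "norm (blinfun_scaleR_left C o\<^sub>L blinfun_inner_left t) \<le> c * norm t ^ Suc k"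
proof -
  have "norm (blinfun_scaleR_left C) \<le> norm C"
    by (rule norm_blinfun_bound) (auto simp: mult.commute)
  moreover have "norm (blinfun_inner_left t) \<le> norm t"
    by (rule norm_blinfun_bound) (auto simp: Cauchy_Schwarz_ineq2 mult.commute)
  ultimately have "norm (blinfun_scaleR_left C o\<^sub>L blinfun_inner_left t) \<le> norm C * norm t"
    by (meson mult_mono norm_blinfun_compose norm_ge_zero order_trans)
  also have "\<dots> \<le> c * norm t ^ Suc k"
    using mult_right_mono[OF assms norm_ge_zero[of t]] by (simp add: algebra_simps)
  finally show ?thesis .
qed

lemma npow_abs_inner_le:
  "0 \<le> r \<Longrightarrow> npow \<bar>t \<bullet> x\<bar> r \<le> npow (norm t) r * npow (norm x) r"
  using npow_mono[OF abs_ge_zero Cauchy_Schwarz_ineq2, of r t x] by (simp add: npow_mult)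

lemma abs_ridge_le:
  fixes t x :: "'a::real_inner"
  assumes growth: "\<And>s. \<bar>\<phi> s\<bar> \<le> B * (1 + npow \<bar>s\<bar> r)" and r: "0 \<le> r" and B: "0 \<le> B"
  shows "\<bar>\<phi> (t \<bullet> x)\<bar> \<le> B * (1 + npow (norm t) r) * (1 + npow (norm x) r)"
proof -
  have "1 + npow \<bar>t \<bullet> x\<bar> r \<le> (1 + npow (norm t) r) * (1 + npow (norm x) r)"
    using npow_abs_inner_le[OF r, of t x] npow_nonneg[of "norm x" r] npow_nonneg[of "norm t" r]
    by (simp add: algebra_simps)
  then show ?thesis
    using order_trans[OF growth mult_left_mono[OF _ B]] by (simp add: mult.assoc)
qed

lemma abs_diff_ridge_le:
  fixes t x y :: "'a::real_inner"
  assumes deriv: "\<And>s. (\<psi> has_real_derivative \<psi>' s) (at s)"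
    and growth: "\<And>s. \<bar>\<psi>' s\<bar> \<le> B * (1 + npow \<bar>s\<bar> r)" and r: "0 \<le> r" and B: "0 \<le> B"
  shows "\<bar>\<psi> (t \<bullet> x) - \<psi> (t \<bullet> y)\<bar>
    \<le> B * (1 + npow (norm t) r) * norm t * ((1 + npow (norm x) r + npow (norm y) r) * norm (x - y))"
proof -
  let ?A = "1 + npow (norm x) r + npow (norm y) r"
  have "1 + npow \<bar>t \<bullet> x\<bar> r + npow \<bar>t \<bullet> y\<bar> r \<le> (1 + npow (norm t) r) * ?A"
    using npow_abs_inner_le[OF r, of t x] npow_abs_inner_le[OF r, of t y]
      npow_nonneg[of "norm x" r] npow_nonneg[of "norm y" r] npow_nonneg[of "norm t" r]
    by (simp add: algebra_simps)
  moreover have "\<bar>t \<bullet> x - t \<bullet> y\<bar> \<le> norm t * norm (x - y)"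
    using Cauchy_Schwarz_ineq2[of t "x - y"] by (simp add: inner_diff_right)
  ultimately have "B * (1 + npow \<bar>t \<bullet> x\<bar> r + npow \<bar>t \<bullet> y\<bar> r) * \<bar>t \<bullet> x - t \<bullet> y\<bar>
      \<le> B * ((1 + npow (norm t) r) * ?A) * (norm t * norm (x - y))"
    using B npow_nonneg[of "\<bar>t \<bullet> x\<bar>" r] npow_nonneg[of "\<bar>t \<bullet> y\<bar>" r]
    by (intro mult_mono mult_left_mono) auto
  with abs_diff_le_if_deriv_growth[OF deriv growth r B, of "t \<bullet> x" "t \<bullet> y"] show ?thesis
    by (simp add: algebra_simps)
qed

lemma ridge_derivatives:
  fixes t :: "'a::real_inner" and c :: real
  assumes d0: "\<And>s. (\<psi> has_real_derivative \<psi>1 s) (at s)"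
    and d1: "\<And>s. (\<psi>1 has_real_derivative \<psi>2 s) (at s)"
    and d2: "\<And>s. (\<psi>2 has_real_derivative \<psi>3 s) (at s)"
    and c3: "continuous_on UNIV \<psi>3" and c: "0 \<le> c"
  obtains f1 f2 f3 where "\<And>x. ((\<lambda>x. c * \<psi> (t \<bullet> x)) has_derivative blinfun_apply (f1 x)) (at x)"
    "\<And>x. (f1 has_derivative blinfun_apply (f2 x)) (at x)"
    "\<And>x. (f2 has_derivative blinfun_apply (f3 x)) (at x)" "continuous_on UNIV f3"
    "\<And>x. norm (f2 x) \<le> \<bar>\<psi>2 (t \<bullet> x)\<bar> * (c * norm t ^ 2)"
    "\<And>x. norm (f3 x) \<le> \<bar>\<psi>3 (t \<bullet> x)\<bar> * (c * norm t ^ 3)"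
proof
  define L1 where "L1 = blinfun_scaleR_left c o\<^sub>L blinfun_inner_left t"
  define L2 where "L2 = blinfun_scaleR_left L1 o\<^sub>L blinfun_inner_left t"
  define L3 where "L3 = blinfun_scaleR_left L2 o\<^sub>L blinfun_inner_left t"
  have L1: "norm L1 \<le> c * norm t ^ 1"
    using norm_blinfun_scaleR_left_compose_inner_left_le[of c c t 0] c by (simp add: L1_def)
  have L2: "norm L2 \<le> c * norm t ^ 2"
    using norm_blinfun_scaleR_left_compose_inner_left_le[OF L1] by (simp add: L2_def numeral_2_eq_2)
  have L3: "norm L3 \<le> c * norm t ^ 3"
    using norm_blinfun_scaleR_left_compose_inner_left_le[OF L2] by (simp add: L3_def numeral_3_eq_3)
  show "((\<lambda>x. c * \<psi> (t \<bullet> x)) has_derivative blinfun_apply (\<psi>1 (t \<bullet> x) *\<^sub>R L1)) (at x)" for x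
    using has_derivative_ridge[where C = c and t = t and x = x, OF d0] by (simp add: L1_def mult.commute)
  show "((\<lambda>x. \<psi>1 (t \<bullet> x) *\<^sub>R L1) has_derivative blinfun_apply (\<psi>2 (t \<bullet> x) *\<^sub>R L2)) (at x)" for x
    using has_derivative_ridge[where C = L1 and t = t and x = x, OF d1] by (simp add: L2_def)
  show "((\<lambda>x. \<psi>2 (t \<bullet> x) *\<^sub>R L2) has_derivative blinfun_apply (\<psi>3 (t \<bullet> x) *\<^sub>R L3)) (at x)" for x
    using has_derivative_ridge[where C = L2 and t = t and x = x, OF d2] by (simp add: L3_def)
  show "continuous_on UNIV (\<lambda>x. \<psi>3 (t \<bullet> x) *\<^sub>R L3)"
    by (intro continuous_intros continuous_on_compose2[OF c3]) auto
  show "norm (\<psi>2 (t \<bullet> x) *\<^sub>R L2) \<le> \<bar>\<psi>2 (t \<bullet> x)\<bar> * (c * norm t ^ 2)" for x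
    using mult_left_mono[OF L2, of "\<bar>\<psi>2 (t \<bullet> x)\<bar>"] by simp
  show "norm (\<psi>3 (t \<bullet> x) *\<^sub>R L3) \<le> \<bar>\<psi>3 (t \<bullet> x)\<bar> * (c * norm t ^ 3)" for x
    using mult_left_mono[OF L3, of "\<bar>\<psi>3 (t \<bullet> x)\<bar>"] by simp
qed

lemma ridge_in_F_class:
  fixes t :: "'a::euclidean_space"
  assumes q: "1 \<le> q" and \<psi>: "ridge_profile (q - 1) \<psi>"
  shows "\<exists>c>0. (\<lambda>x. c * \<psi> (t \<bullet> x)) \<in> F_class q"
proof -
  define r where "r = q - 1"
  obtain \<psi>1 \<psi>2 \<psi>3 B where
      d0: "\<And>s. (\<psi> has_real_derivative \<psi>1 s) (at s)"
    and d1: "\<And>s. (\<psi>1 has_real_derivative \<psi>2 s) (at s)"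
    and d2: "\<And>s. (\<psi>2 has_real_derivative \<psi>3 s) (at s)"
    and c3: "continuous_on UNIV \<psi>3"
    and g: "\<And>s. \<bar>\<psi>1 s\<bar> \<le> B * (1 + npow \<bar>s\<bar> r)" "\<And>s. \<bar>\<psi>2 s\<bar> \<le> B * (1 + npow \<bar>s\<bar> r)"
      "\<And>s. \<bar>\<psi>3 s\<bar> \<le> B * (1 + npow \<bar>s\<bar> r)"
    using \<psi> unfolding ridge_profile_def r_def by blast
  have r: "0 \<le> r" using q by (simp add: r_def)
  have B: "0 \<le> B" using g(1)[of 0] npow_nonneg[of 0 r] by (smt (verit) zero_le_mult_iff)
  define K where "K = 1 + npow (norm t) r"
  define T where "T = (1 + norm t) ^ 3"
  define c where "c = 1 / (B * K * T + 1)"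
  have K: "1 \<le> K" by (simp add: K_def npow_nonneg)
  have T: "norm t ^ k \<le> T" if "k \<le> 3" for k
    using power_mono[of "norm t" "1 + norm t" k] power_increasing[OF that, of "1 + norm t"]
    by (simp add: T_def)
  have BKT: "0 \<le> B * K * T" using B K T[of 0] by simp
  then have c: "0 < c" "c * (B * K * T) \<le> 1"
    by (simp_all add: c_def field_simps)
  have cBKT: "c * (B * K * norm t ^ k) * z \<le> z" if "k \<le> 3" "0 \<le> z" for k z
  proof -
    have "c * (B * K * norm t ^ k) \<le> c * (B * K * T)"
      using T[OF that(1)] B K c(1) by (intro mult_left_mono) auto
    then have "c * (B * K * norm t ^ k) \<le> 1" using c(2) by linarith
    then show ?thesis using c(1) that(2) B K by (intro mult_left_le_one_le) auto
  qed
  have growth: "\<bar>\<phi> (t \<bullet> x)\<bar> * (c * norm t ^ k) \<le> 1 + npow (norm x) r"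
    if \<phi>: "\<And>s. \<bar>\<phi> s\<bar> \<le> B * (1 + npow \<bar>s\<bar> r)" and k: "k \<le> 3" for \<phi> :: "real \<Rightarrow> real" and k x
    using mult_right_mono[OF abs_ridge_le[OF \<phi> r B, of t x], of "c * norm t ^ k"]
      cBKT[OF k, of "1 + npow (norm x) r"] c(1) npow_nonneg[of "norm x" r]
    by (simp add: K_def algebra_simps)
  obtain f1 f2 f3 where f: "\<And>x. ((\<lambda>x. c * \<psi> (t \<bullet> x)) has_derivative blinfun_apply (f1 x)) (at x)"
      "\<And>x. (f1 has_derivative blinfun_apply (f2 x)) (at x)"
      "\<And>x. (f2 has_derivative blinfun_apply (f3 x)) (at x)" "continuous_on UNIV f3"
      "\<And>x. norm (f2 x) \<le> \<bar>\<psi>2 (t \<bullet> x)\<bar> * (c * norm t ^ 2)"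
      "\<And>x. norm (f3 x) \<le> \<bar>\<psi>3 (t \<bullet> x)\<bar> * (c * norm t ^ 3)"
    using ridge_derivatives[OF d0 d1 d2 c3, of c t] c(1) by auto
  have "norm (f2 x) \<le> 1 + npow (norm x) r" "norm (f3 x) \<le> 1 + npow (norm x) r" for x
    using f(5)[of x] f(6)[of x] growth[OF g(2), of 2 x] growth[OF g(3), of 3 x] by auto
  moreover have "pseudo_lipschitz r 1 (\<lambda>x. c * \<psi> (t \<bullet> x))"
    unfolding pseudo_lipschitz_def
  proof (intro allI)
    fix x y :: 'a
    let ?A = "(1 + npow (norm x) r + npow (norm y) r) * norm (x - y)"
    have "\<bar>c * \<psi> (t \<bullet> x) - c * \<psi> (t \<bullet> y)\<bar> = c * \<bar>\<psi> (t \<bullet> x) - \<psi> (t \<bullet> y)\<bar>"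
      using c(1) by (simp add: abs_mult flip: right_diff_distrib)
    also have "\<dots> \<le> c * (B * K * norm t ^ 1 * ?A)"
      using abs_diff_ridge_le[OF d0 g(1) r B, of t x y] c(1) by (simp add: K_def)
    also have "\<dots> \<le> ?A"
      using cBKT[of 1 ?A] by (simp add: mult.assoc npow_nonneg add_nonneg_nonneg)
    finally show "\<bar>c * \<psi> (t \<bullet> x) - c * \<psi> (t \<bullet> y)\<bar> \<le> 1 * (1 + npow (norm x) r + npow (norm y) r) * norm (x - y)"
      by simp
  qed
  ultimately show ?thesis
    using c(1) f(1-4) unfolding F_class_def r_def by blast
qed

lemma integral_ridge_tendsto_if_d_F_tendsto_0:
  fixes t :: "'a::euclidean_space"
  assumes q: "1 \<le> q" and P: "P \<in> P_class q" and Q: "\<And>n. Q n \<in> P_class q"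
    and d: "(\<lambda>n. d_F q (Q n) P) \<longlonglongrightarrow> 0" and \<psi>: "ridge_profile (q - 1) \<psi>"
  shows "(\<lambda>n. \<integral>x. \<psi> (t \<bullet> x) \<partial>Q n) \<longlonglongrightarrow> (\<integral>x. \<psi> (t \<bullet> x) \<partial>P)"
proof -
  obtain c where c: "c > 0" "(\<lambda>x. c * \<psi> (t \<bullet> x)) \<in> F_class q"
    using ridge_in_F_class[OF q \<psi>] by blast
  have "(\<lambda>n. c * \<integral>x. \<psi> (t \<bullet> x) \<partial>Q n) \<longlonglongrightarrow> c * (\<integral>x. \<psi> (t \<bullet> x) \<partial>P)"
    using integral_tendsto_if_d_F_tendsto_0[OF q P Q d c(2)] by simp
  from tendsto_mult_left[OF this, of "1 / c"] show ?thesis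
    using c(1) by simp
qed

section \<open>Cutoffs and uniformly small tails\<close>

definition cutoff :: "real \<Rightarrow> 'a::real_normed_vector \<Rightarrow> real" where
  "cutoff R x = max 0 (min 1 (R + 1 - norm x))"

lemma continuous_on_cutoff: "continuous_on UNIV (cutoff R)"
  unfolding cutoff_def by (intro continuous_intros)

lemma cutoff_nonneg: "0 \<le> cutoff R x" and cutoff_le_1: "cutoff R x \<le> 1"
  by (auto simp: cutoff_def)

lemma cutoff_eq_1: "norm x \<le> R \<Longrightarrow> cutoff R x = 1"
  by (auto simp: cutoff_def)

lemma cutoff_eq_0: "R + 1 \<le> norm x \<Longrightarrow> cutoff R x = 0"
  by (auto simp: cutoff_def)

lemma cutoff_mono: "R \<le> R' \<Longrightarrow> cutoff R x \<le> cutoff R' x"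
  by (auto simp: cutoff_def)

lemma cutoff_lipschitz: "\<bar>cutoff R x - cutoff R y\<bar> \<le> norm (x - y)"
  using norm_triangle_ineq3[of x y] by (auto simp: cutoff_def max_def min_def)

lemma cutoff_tendsto_1: "(\<lambda>m. cutoff (real m) x) \<longlonglongrightarrow> 1"
proof (rule tendsto_eventually)
  obtain N :: nat where "norm x \<le> real N" using real_arch_simple by blast
  then show "eventually (\<lambda>m. cutoff (real m) x = 1) sequentially"
    unfolding eventually_sequentially by (auto intro!: exI[of _ N] cutoff_eq_1)
qed

lemma bounded_mult_cutoff:
  fixes H :: "'a::euclidean_space \<Rightarrow> real"
  assumes "continuous_on UNIV H"
  obtains B where "\<And>x. \<bar>H x * cutoff R x\<bar> \<le> B"
proof -
  have "compact (H ` cball 0 (R + 1))"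
    by (rule compact_continuous_image) (use assms continuous_on_subset in auto)
  then obtain B where B: "\<And>x. x \<in> cball 0 (R + 1) \<Longrightarrow> \<bar>H x\<bar> \<le> B"
    using compact_imp_bounded bounded_real by (meson imageI)
  have "\<bar>H x * cutoff R x\<bar> \<le> max B 0" for x
  proof (cases "norm x \<le> R + 1")
    case True
    then have "\<bar>H x\<bar> * \<bar>cutoff R x\<bar> \<le> B * 1"
      using B[of x] cutoff_nonneg[of R x] cutoff_le_1[of R x] by (intro mult_mono) auto
    then show ?thesis by (simp add: abs_mult)
  qed (simp add: cutoff_eq_0)
  then show ?thesis using that by blast
qed

lemma weak_convD:
  fixes f :: "'a::topological_space \<Rightarrow> real"
  assumes "weak_conv Q P" "continuous_on UNIV f" "\<And>x. \<bar>f x\<bar> \<le> B"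
  shows "(\<lambda>n. \<integral>x. f x \<partial>Q n) \<longlonglongrightarrow> (\<integral>x. f x \<partial>P)"
proof -
  have "bounded (range f)" by (rule boundedI[where B = B]) (use assms(3) in auto)
  then show ?thesis using assms(1,2) unfolding weak_conv_def by blast
qed

lemma weak_conv_eventually_uniform_on_finite:
  fixes N :: "('a::topological_space \<Rightarrow> real) set"
  assumes wc: "weak_conv Q P" and N: "finite N"
    and bounded: "\<And>h. h \<in> N \<Longrightarrow> continuous_on UNIV h \<and> (\<forall>x. \<bar>h x\<bar> \<le> B)" and e: "0 < e"
  shows "\<exists>n0. \<forall>n\<ge>n0. \<forall>h\<in>N. \<bar>(\<integral>x. h x \<partial>Q n) - (\<integral>x. h x \<partial>P)\<bar> < e"
proof -
  have "\<forall>\<^sub>F n in sequentially. \<forall>h\<in>N. \<bar>(\<integral>x. h x \<partial>Q n) - (\<integral>x. h x \<partial>P)\<bar> < e"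
  proof (rule eventually_ball_finite[OF N], intro ballI)
    fix h assume "h \<in> N"
    with bounded have "(\<lambda>n. \<integral>x. h x \<partial>Q n) \<longlonglongrightarrow> (\<integral>x. h x \<partial>P)"
      using weak_convD[OF wc] by blast
    then show "\<forall>\<^sub>F n in sequentially. \<bar>(\<integral>x. h x \<partial>Q n) - (\<integral>x. h x \<partial>P)\<bar> < e"
      using e unfolding tendsto_iff dist_real_def by blast
  qed
  then show ?thesis
    unfolding eventually_sequentially .
qed

lemma weak_conv_integral_mult_cutoff:
  fixes H :: "'a::euclidean_space \<Rightarrow> real"
  assumes "weak_conv Q P" "continuous_on UNIV H"
  shows "(\<lambda>n. \<integral>x. H x * cutoff R x \<partial>Q n) \<longlonglongrightarrow> (\<integral>x. H x * cutoff R x \<partial>P)"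
proof -
  obtain B where "\<And>x. \<bar>H x * cutoff R x\<bar> \<le> B" using bounded_mult_cutoff[OF assms(2)] by blast
  moreover have "continuous_on UNIV (\<lambda>x. H x * cutoff R x)"
    by (intro continuous_intros assms(2) continuous_on_cutoff)
  ultimately show ?thesis using weak_convD[OF assms(1)] by blast
qed

lemma integrable_mult_cutoff:
  fixes H :: "'a::euclidean_space \<Rightarrow> real"
  assumes M: "M \<in> P_class q" and H: "integrable M H" "continuous_on UNIV H"
  shows "integrable M (\<lambda>x. H x * cutoff R x)" "integrable M (\<lambda>x. H x * (1 - cutoff R x))"
proof -
  have "\<bar>1 - cutoff R x\<bar> \<le> 1" "\<bar>cutoff R x\<bar> \<le> 1" for x
    using cutoff_nonneg[of R x] cutoff_le_1[of R x] by auto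
  then have "norm (H x * cutoff R x) \<le> norm (H x)" "norm (H x * (1 - cutoff R x)) \<le> norm (H x)" for x
    by (auto simp: abs_mult intro!: mult_left_le)
  moreover have "(\<lambda>x. H x * cutoff R x) \<in> borel_measurable M"
    "(\<lambda>x. H x * (1 - cutoff R x)) \<in> borel_measurable M"
    by (intro P_class_borel_measurable[OF M] continuous_intros H(2) continuous_on_cutoff)+
  ultimately show "integrable M (\<lambda>x. H x * cutoff R x)" "integrable M (\<lambda>x. H x * (1 - cutoff R x))"
    by (auto intro: Bochner_Integration.integrable_bound[OF H(1)])
qed

lemma integral_tail_antimono:
  fixes H :: "'a::euclidean_space \<Rightarrow> real"
  assumes M: "M \<in> P_class q" and H: "integrable M H" "continuous_on UNIV H" "\<And>x. 0 \<le> H x"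
    and "R \<le> R'"
  shows "(\<integral>x. H x * (1 - cutoff R' x) \<partial>M) \<le> (\<integral>x. H x * (1 - cutoff R x) \<partial>M)"
  by (rule integral_mono[OF integrable_mult_cutoff(2)[OF M H(1,2)] integrable_mult_cutoff(2)[OF M H(1,2)]])
     (use H(3) cutoff_mono[OF \<open>R \<le> R'\<close>] in \<open>auto intro!: mult_left_mono\<close>)

lemma integral_tail_tendsto_0:
  fixes H :: "'a::euclidean_space \<Rightarrow> real"
  assumes M: "M \<in> P_class q" and H: "integrable M H" "continuous_on UNIV H" "\<And>x. 0 \<le> H x"
  shows "(\<lambda>m. \<integral>x. H x * (1 - cutoff (real m) x) \<partial>M) \<longlonglongrightarrow> 0"
proof -
  have "(\<lambda>m. \<integral>x. H x * (1 - cutoff (real m) x) \<partial>M) \<longlonglongrightarrow> (\<integral>x. 0 \<partial>M)"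
  proof (rule integral_dominated_convergence[where w = H])
    show "AE x in M. (\<lambda>m. H x * (1 - cutoff (real m) x)) \<longlonglongrightarrow> 0"
      using tendsto_mult_left[OF tendsto_diff[OF tendsto_const cutoff_tendsto_1], of "H x" 1 for x]
      by auto
    show "AE x in M. norm (H x * (1 - cutoff (real m) x)) \<le> H x" for m
    proof (intro AE_I2)
      fix x :: 'a
      have "\<bar>1 - cutoff (real m) x\<bar> \<le> 1"
        using cutoff_nonneg[of "real m" x] cutoff_le_1[of "real m" x] by linarith
      then show "norm (H x * (1 - cutoff (real m) x)) \<le> H x"
        using H(3)[of x] by (simp add: abs_mult mult_left_le)
    qed
  qed (use integrable_mult_cutoff(2)[OF M H(1,2)] H(1) in auto)
  then show ?thesis by simp
qed

text \<open>A diagonal argument: each row T n tends to 0, the columns tend to the limit row S, and the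
  rows are antitone, so a single index makes all rows and the limit row small.\<close>

lemma uniformly_small_if_antimono_tendsto_0:
  fixes T :: "nat \<Rightarrow> nat \<Rightarrow> real" and S :: "nat \<Rightarrow> real"
  assumes antimono: "\<And>n m m'. m \<le> m' \<Longrightarrow> T n m' \<le> T n m"
    and rows: "\<And>n. (\<lambda>m. T n m) \<longlonglongrightarrow> 0"
    and columns: "\<And>m. (\<lambda>n. T n m) \<longlonglongrightarrow> S m"
    and S: "S \<longlonglongrightarrow> 0" and e: "0 < e"
  shows "\<exists>m. (\<forall>n. T n m \<le> e) \<and> S m \<le> e"
proof -
  obtain m1 where m1: "\<And>m. m1 \<le> m \<Longrightarrow> \<bar>S m\<bar> < e / 2"
    using S e unfolding LIMSEQ_def dist_real_def by (metis diff_zero half_gt_zero)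
  obtain N where N: "\<And>n. N \<le> n \<Longrightarrow> \<bar>T n m1 - S m1\<bar> < e / 2"
    using columns[of m1] e unfolding LIMSEQ_def dist_real_def by (metis half_gt_zero)
  have "\<forall>n. \<exists>k. \<forall>m\<ge>k. \<bar>T n m\<bar> < e"
    using rows e unfolding LIMSEQ_def dist_real_def by (metis diff_zero)
  then obtain k where k: "\<And>n m. k n \<le> m \<Longrightarrow> \<bar>T n m\<bar> < e" by metis
  define m0 where "m0 = m1 + (\<Sum>n<N. k n)"
  have "T n m0 \<le> e" for n
  proof (cases "n < N")
    case True
    then have "k n \<le> m0" unfolding m0_def using member_le_sum[of n "{..<N}" k] by simp
    then show ?thesis using k[of n m0] by simp
  next
    case False
    then have "\<bar>T n m1 - S m1\<bar> < e / 2" using N[of n] by simp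
    then have "T n m1 < e" using m1[of m1] by linarith
    moreover have "T n m0 \<le> T n m1" by (rule antimono) (simp add: m0_def)
    ultimately show ?thesis by simp
  qed
  moreover have "S m0 \<le> e" using m1[of m0] by (simp add: m0_def)
  ultimately show ?thesis by blast
qed

definition uniform_tails :: "('a::euclidean_space \<Rightarrow> real) \<Rightarrow> (nat \<Rightarrow> 'a measure) \<Rightarrow> 'a measure \<Rightarrow> bool" where
  "uniform_tails H Q P \<longleftrightarrow> (\<forall>e>0. \<exists>R. (\<forall>n. (\<integral>x. H x * (1 - cutoff R x) \<partial>Q n) \<le> e) \<and>
                                       (\<integral>x. H x * (1 - cutoff R x) \<partial>P) \<le> e)"

lemma uniform_tails_if_integral_tendsto:
  fixes H :: "'a::euclidean_space \<Rightarrow> real"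
  assumes P: "P \<in> P_class q" and Q: "\<And>n. Q n \<in> P_class q" and wc: "weak_conv Q P"
    and H: "continuous_on UNIV H" "\<And>x. 0 \<le> H x" "\<And>n. integrable (Q n) H" "integrable P H"
    and lim: "(\<lambda>n. \<integral>x. H x \<partial>Q n) \<longlonglongrightarrow> (\<integral>x. H x \<partial>P)"
  shows "uniform_tails H Q P"
  unfolding uniform_tails_def
proof (intro allI impI)
  fix e :: real assume e: "0 < e"
  have tail_eq: "(\<integral>x. H x * (1 - cutoff R x) \<partial>M) = (\<integral>x. H x \<partial>M) - (\<integral>x. H x * cutoff R x \<partial>M)"
    if M: "M \<in> P_class q" and HM: "integrable M H" for M and R :: real
    using HM integrable_mult_cutoff(1)[OF M HM H(1)] by (simp add: right_diff_distrib)
  define T where "T n m = (\<integral>x. H x * (1 - cutoff (real m) x) \<partial>Q n)" for n m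
  define S where "S m = (\<integral>x. H x * (1 - cutoff (real m) x) \<partial>P)" for m
  have "\<exists>m. (\<forall>n. T n m \<le> e) \<and> S m \<le> e"
  proof (rule uniformly_small_if_antimono_tendsto_0[OF _ _ _ _ e])
    show "T n m' \<le> T n m" if "m \<le> m'" for n m m'
      unfolding T_def using that by (intro integral_tail_antimono[OF Q H(3,1,2)]) auto
    show "(\<lambda>m. T n m) \<longlonglongrightarrow> 0" for n
      unfolding T_def by (rule integral_tail_tendsto_0[OF Q H(3,1,2)])
    show "S \<longlonglongrightarrow> 0"
      unfolding S_def by (rule integral_tail_tendsto_0[OF P H(4,1,2)])
    show "(\<lambda>n. T n m) \<longlonglongrightarrow> S m" for m
      using tendsto_diff[OF lim weak_conv_integral_mult_cutoff[OF wc H(1)]]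
      unfolding T_def S_def by (simp add: tail_eq[OF Q H(3)] tail_eq[OF P H(4)])
  qed
  then show "\<exists>R. (\<forall>n. (\<integral>x. H x * (1 - cutoff R x) \<partial>Q n) \<le> e) \<and> (\<integral>x. H x * (1 - cutoff R x) \<partial>P) \<le> e"
    unfolding T_def S_def by blast
qed

lemma integral_minus_integral_mult_cutoff_le:
  fixes F H :: "'a::euclidean_space \<Rightarrow> real"
  assumes M: "M \<in> P_class q" and F: "integrable M F" "continuous_on UNIV F"
    and H: "integrable M H" "continuous_on UNIV H"
    and bound: "\<And>x. \<bar>F x\<bar> * (1 - cutoff R x) \<le> C * (H x * (1 - cutoff R x))"
  shows "\<bar>(\<integral>x. F x \<partial>M) - (\<integral>x. F x * cutoff R x \<partial>M)\<bar> \<le> C * (\<integral>x. H x * (1 - cutoff R x) \<partial>M)"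
proof -
  note FR = integrable_mult_cutoff[OF M F]
  have "(\<integral>x. F x \<partial>M) - (\<integral>x. F x * cutoff R x \<partial>M) = (\<integral>x. F x * (1 - cutoff R x) \<partial>M)"
    using F(1) FR by (simp add: right_diff_distrib)
  also have "\<bar>\<dots>\<bar> \<le> (\<integral>x. \<bar>F x * (1 - cutoff R x)\<bar> \<partial>M)"
    by (rule integral_abs_bound)
  also have "\<dots> \<le> (\<integral>x. C * (H x * (1 - cutoff R x)) \<partial>M)"
  proof (rule integral_mono)
    show "integrable M (\<lambda>x. \<bar>F x * (1 - cutoff R x)\<bar>)"
      using FR(2) by (rule integrable_abs)
    show "integrable M (\<lambda>x. C * (H x * (1 - cutoff R x)))"
      using integrable_mult_cutoff(2)[OF M H] by simp
    show "\<bar>F x * (1 - cutoff R x)\<bar> \<le> C * (H x * (1 - cutoff R x))" for x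
      using bound[of x] cutoff_le_1[of R x] by (simp add: abs_mult)
  qed
  finally show ?thesis by simp
qed

lemma tendsto_if_approximable:
  fixes a :: "nat \<Rightarrow> real"
  assumes approx: "\<And>\<epsilon>. 0 < \<epsilon> \<Longrightarrow> \<exists>b c. b \<longlonglongrightarrow> c \<and> (\<forall>n. \<bar>a n - b n\<bar> \<le> \<epsilon>) \<and> \<bar>l - c\<bar> \<le> \<epsilon>"
  shows "a \<longlonglongrightarrow> l"
proof (rule LIMSEQ_I)
  fix r :: real assume "0 < r"
  then obtain b c where b: "b \<longlonglongrightarrow> c" "\<And>n. \<bar>a n - b n\<bar> \<le> r / 4" "\<bar>l - c\<bar> \<le> r / 4"
    using approx[of "r / 4"] by auto
  obtain N where N: "\<forall>n\<ge>N. norm (b n - c) < r / 4"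
    using LIMSEQ_D[OF b(1), of "r / 4"] \<open>0 < r\<close> by auto
  have "\<bar>a n - l\<bar> < r" if "N \<le> n" for n
  proof -
    have "\<bar>b n - c\<bar> < r / 4" using N that by simp
    then show ?thesis
      using b(2)[of n] b(3) \<open>0 < r\<close> unfolding abs_less_iff abs_le_iff by linarith
  qed
  then have "\<forall>n\<ge>N. \<bar>a n - l\<bar> < r" by blast
  then show "\<exists>N. \<forall>n\<ge>N. norm (a n - l) < r" by auto
qed

lemma integral_tendsto_if_dominated:
  fixes F H :: "'a::euclidean_space \<Rightarrow> real"
  assumes P: "P \<in> P_class q" and Q: "\<And>n. Q n \<in> P_class q" and wc: "weak_conv Q P"
    and H: "continuous_on UNIV H" "\<And>n. integrable (Q n) H" "integrable P H"
    and tails: "uniform_tails H Q P"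
    and F: "continuous_on UNIV F" and dom: "\<And>x. \<bar>F x\<bar> \<le> C * H x" and C: "0 \<le> C"
  shows "(\<lambda>n. \<integral>x. F x \<partial>Q n) \<longlonglongrightarrow> (\<integral>x. F x \<partial>P)"
proof (rule tendsto_if_approximable)
  fix \<epsilon> :: real assume "0 < \<epsilon>"
  then have "0 < \<epsilon> / (C + 1)" using C by simp
  then obtain R where RQ: "\<And>n. (\<integral>x. H x * (1 - cutoff R x) \<partial>Q n) \<le> \<epsilon> / (C + 1)"
      and RP: "(\<integral>x. H x * (1 - cutoff R x) \<partial>P) \<le> \<epsilon> / (C + 1)"
    using tails unfolding uniform_tails_def by blast
  have close: "\<bar>(\<integral>x. F x \<partial>M) - (\<integral>x. F x * cutoff R x \<partial>M)\<bar> \<le> \<epsilon>"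
    if M: "M \<in> P_class q" and HM: "integrable M H"
      and tail: "(\<integral>x. H x * (1 - cutoff R x) \<partial>M) \<le> \<epsilon> / (C + 1)" for M
  proof -
    have FM: "integrable M F"
      by (rule Bochner_Integration.integrable_bound[of _ "\<lambda>x. C * H x"])
         (use HM P_class_borel_measurable[OF M F] dom in \<open>auto intro: order_trans[OF _ abs_ge_self]\<close>)
    have "\<bar>F x\<bar> * (1 - cutoff R x) \<le> C * (H x * (1 - cutoff R x))" for x
      using mult_right_mono[OF dom[of x], of "1 - cutoff R x"] cutoff_le_1[of R x] by simp
    then have "\<bar>(\<integral>x. F x \<partial>M) - (\<integral>x. F x * cutoff R x \<partial>M)\<bar> \<le> C * (\<integral>x. H x * (1 - cutoff R x) \<partial>M)"
      by (rule integral_minus_integral_mult_cutoff_le[OF M FM F HM H(1)])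
    also have "\<dots> \<le> C * (\<epsilon> / (C + 1))"
      by (rule mult_left_mono[OF tail C])
    also have "\<dots> = \<epsilon> * (C / (C + 1))"
      by simp
    also have "\<dots> \<le> \<epsilon>"
      using C \<open>0 < \<epsilon>\<close> by (intro mult_left_le) auto
    finally show ?thesis .
  qed
  show "\<exists>b c. b \<longlonglongrightarrow> c \<and> (\<forall>n. \<bar>(\<integral>x. F x \<partial>Q n) - b n\<bar> \<le> \<epsilon>) \<and> \<bar>(\<integral>x. F x \<partial>P) - c\<bar> \<le> \<epsilon>"
  proof (intro exI conjI allI)
    show "(\<lambda>n. \<integral>x. F x * cutoff R x \<partial>Q n) \<longlonglongrightarrow> (\<integral>x. F x * cutoff R x \<partial>P)"
      by (rule weak_conv_integral_mult_cutoff[OF wc F])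
  qed (intro close P Q H RQ RP)+
qed
section \<open>Weak convergence and convergence of q-th moments imply d_F convergence\<close>

lemma abs_diff_less_if_floor_divide_eq:
  fixes a b e :: real
  assumes "0 < e" "\<lfloor>a / e\<rfloor> = \<lfloor>b / e\<rfloor>"
  shows "\<bar>a - b\<bar> < e"
proof -
  define z where "z = real_of_int \<lfloor>a / e\<rfloor>"
  have "z \<le> a / e" "a / e < z + 1"
    unfolding z_def by (simp_all add: real_of_int_floor_add_one_gt)
  moreover have "z \<le> b / e" "b / e < z + 1"
    unfolding z_def assms(2) by (simp_all add: real_of_int_floor_add_one_gt)
  ultimately
  have "\<bar>(a - b) / e\<bar> < 1"
    by (simp add: diff_divide_distrib abs_less_iff)
  then show ?thesis
    using assms(1) by (simp add: abs_divide)
qed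

lemma finite_floor_profiles:
  fixes A :: "('a \<Rightarrow> real) set"
  assumes S: "finite S" and bounded: "\<And>g x. g \<in> A \<Longrightarrow> \<bar>g x\<bar> \<le> M" and \<epsilon>: "0 < \<epsilon>"
  shows "finite ((\<lambda>g. restrict (\<lambda>p. \<lfloor>g p / \<epsilon>\<rfloor>) S) ` A)"
proof -
  define k where "k = \<lceil>M / \<epsilon>\<rceil>"
  have "\<lfloor>g p / \<epsilon>\<rfloor> \<in> {-k..k}" if "g \<in> A" for g p
  proof -
    have "- M \<le> g p" "g p \<le> M"
      using bounded[OF that, of p] by (auto simp: abs_le_iff)
    then have "- (M / \<epsilon>) \<le> g p / \<epsilon>" "g p / \<epsilon> \<le> M / \<epsilon>"
      using divide_right_mono[of _ _ \<epsilon>] \<epsilon> by fastforce+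
    then have "\<lfloor>- (M / \<epsilon>)\<rfloor> \<le> \<lfloor>g p / \<epsilon>\<rfloor>" "\<lfloor>g p / \<epsilon>\<rfloor> \<le> \<lfloor>M / \<epsilon>\<rfloor>"
      by (simp_all add: floor_mono)
    moreover have "\<lfloor>- (M / \<epsilon>)\<rfloor> = - k"
      unfolding k_def ceiling_def by simp
    moreover have "\<lfloor>M / \<epsilon>\<rfloor> \<le> k"
      unfolding k_def by (rule floor_le_ceiling)
    ultimately show ?thesis by simp
  qed
  then have "(\<lambda>g. restrict (\<lambda>p. \<lfloor>g p / \<epsilon>\<rfloor>) S) ` A \<subseteq> (\<Pi>\<^sub>E p\<in>S. {-k..k})"
    by (auto simp: PiE_iff)
  then show ?thesis
    by (rule finite_subset) (intro finite_PiE S finite_atLeastAtMost_int)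
qed

text \<open>Functions are grouped by the integer parts, on the scale e / 3, of their values at the points
  of a finite net of the ball.\<close>

lemma finite_uniform_net:
  fixes A :: "('a::euclidean_space \<Rightarrow> real) set"
  assumes bounded: "\<And>g x. g \<in> A \<Longrightarrow> \<bar>g x\<bar> \<le> M"
    and lipschitz: "\<And>g x y. g \<in> A \<Longrightarrow> norm x \<le> \<rho> \<Longrightarrow> norm y \<le> \<rho> \<Longrightarrow> \<bar>g x - g y\<bar> \<le> L * norm (x - y)"
    and support: "\<And>g x. g \<in> A \<Longrightarrow> \<rho> < norm x \<Longrightarrow> g x = 0"
    and L: "0 \<le> L" and e: "0 < e"
  obtains N where "finite N" "N \<subseteq> A" "\<And>g. g \<in> A \<Longrightarrow> \<exists>h\<in>N. \<forall>x. \<bar>g x - h x\<bar> \<le> e"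
proof -
  define \<epsilon> where "\<epsilon> = e / 3"
  define \<delta> where "\<delta> = \<epsilon> / (L + 1)"
  have \<epsilon>: "0 < \<epsilon>" using e by (simp add: \<epsilon>_def)
  have \<delta>: "0 < \<delta>" "L * \<delta> \<le> \<epsilon>"
    using \<epsilon> L by (simp_all add: \<delta>_def field_simps)
  note seq_compact_imp_totally_bounded[OF compact_imp_seq_compact[OF compact_cball[of 0 \<rho>]],
      rule_format, OF \<delta>(1)]
  then obtain NN where "finite NN \<and> NN \<subseteq> cball (0::'a) \<rho> \<and> cball 0 \<rho> \<subseteq> (\<Union>p\<in>NN. ball p \<delta>)" ..
  then have NN: "finite NN" "NN \<subseteq> cball (0::'a) \<rho>" "cball 0 \<rho> \<subseteq> (\<Union>p\<in>NN. ball p \<delta>)"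
    by simp_all
  define v where "v g = restrict (\<lambda>p. \<lfloor>g p / \<epsilon>\<rfloor>) NN" for g :: "'a \<Rightarrow> real"
  have fin: "finite (v ` A)"
    unfolding v_def[abs_def] using NN(1) bounded \<epsilon> by (rule finite_floor_profiles)
  define rep where "rep w = (SOME g. g \<in> A \<and> v g = w)" for w
  have rep: "rep (v g) \<in> A" "v (rep (v g)) = v g" if "g \<in> A" for g
    using someI[of "\<lambda>h. h \<in> A \<and> v h = v g" g] that by (auto simp: rep_def)
  have close: "\<bar>g x - h x\<bar> \<le> e" if g: "g \<in> A" and h: "h \<in> A" and vgh: "v g = v h" for g h x
  proof (cases "norm x \<le> \<rho>")
    case True
    then have "x \<in> cball 0 \<rho>" by simp
    then have "x \<in> (\<Union>p\<in>NN. ball p \<delta>)" using NN(3) by blast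
    then obtain p where p: "p \<in> NN" "norm (x - p) < \<delta>"
      by (auto simp: dist_norm norm_minus_commute)
    have "\<lfloor>g p / \<epsilon>\<rfloor> = \<lfloor>h p / \<epsilon>\<rfloor>"
      using fun_cong[OF vgh, of p] p(1) by (simp add: v_def)
    then have "\<bar>g p - h p\<bar> < \<epsilon>"
      by (rule abs_diff_less_if_floor_divide_eq[OF \<epsilon>])
    moreover have "L * norm (x - p) \<le> \<epsilon>"
      using mult_left_mono[of "norm (x - p)" \<delta> L] p(2) \<delta>(2) L by simp
    moreover have "norm p \<le> \<rho>" using NN(2) p(1) by auto
    then have "\<bar>g x - g p\<bar> \<le> L * norm (x - p)" "\<bar>h x - h p\<bar> \<le> L * norm (x - p)"
      using lipschitz[OF g True] lipschitz[OF h True] by auto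
    ultimately show ?thesis unfolding \<epsilon>_def by linarith
  qed (use support[OF g] support[OF h] e in auto)
  show ?thesis
  proof
    show "finite (rep ` v ` A)" "rep ` v ` A \<subseteq> A" using fin rep(1) by auto
    show "\<exists>h\<in>rep ` v ` A. \<forall>x. \<bar>g x - h x\<bar> \<le> e" if "g \<in> A" for g
      using close[OF that rep(1)[OF that]] rep(2)[OF that] that by auto
  qed
qed

lemma abs_integral_diff_le:
  fixes g h w :: "'a \<Rightarrow> real"
  assumes "integrable M g" "integrable M h" "integrable M w" "\<And>x. \<bar>g x - h x\<bar> \<le> w x"
  shows "\<bar>(\<integral>x. g x \<partial>M) - (\<integral>x. h x \<partial>M)\<bar> \<le> (\<integral>x. w x \<partial>M)"
proof -
  have "\<bar>(\<integral>x. g x \<partial>M) - (\<integral>x. h x \<partial>M)\<bar> \<le> (\<integral>x. \<bar>g x - h x\<bar> \<partial>M)"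
    using assms(1,2) integral_abs_bound[of M "\<lambda>x. g x - h x"] by simp
  also have "\<dots> \<le> (\<integral>x. w x \<partial>M)"
    using assms by (intro integral_mono) auto
  finally show ?thesis .
qed
lemma growth_mult_tail_le:
  assumes "1 \<le> q" "1 \<le> R"
  shows "(2 * norm x + norm x powr q) * (1 - cutoff R x) \<le> 3 * (norm x powr q * (1 - cutoff R x))"
proof (cases "norm x \<le> R")
  case False
  then have "norm x powr 1 \<le> norm x powr q" using assms by (intro powr_mono) auto
  then have "2 * norm x + norm x powr q \<le> 3 * norm x powr q" by simp
  from mult_right_mono[OF this, of "1 - cutoff R x"] show ?thesis
    using cutoff_le_1[of R x] by simp
qed (simp add: cutoff_eq_1)

definition truncation :: "real \<Rightarrow> ('a::real_normed_vector \<Rightarrow> real) \<Rightarrow> 'a \<Rightarrow> real" where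
  "truncation R f x = (f x - f 0) * cutoff R x"

lemma truncation_eq_0: "R + 1 \<le> norm x \<Longrightarrow> truncation R f x = 0"
  by (simp add: truncation_def cutoff_eq_0)

lemma continuous_on_truncation: "continuous_on UNIV f \<Longrightarrow> continuous_on UNIV (truncation R f)"
  unfolding truncation_def[abs_def] by (intro continuous_intros continuous_on_cutoff)

lemma F_class_truncation_bounded:
  fixes f :: "'a::euclidean_space \<Rightarrow> real"
  assumes f: "f \<in> F_class q" and q: "1 \<le> q" and R: "0 \<le> R"
  shows "\<bar>truncation R f x\<bar> \<le> 2 * (R + 1) + (R + 1) powr q"
proof (cases "norm x \<le> R + 1")
  case True
  have "\<bar>f x - f 0\<bar> \<le> 2 * (R + 1) + (R + 1) powr q"
    using F_class_growth[OF f q, of x] powr_mono2[of q "norm x" "R + 1"] True q by auto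
  then show ?thesis
    using cutoff_nonneg[of R x] cutoff_le_1[of R x]
    by (auto simp: truncation_def abs_mult intro: order_trans[OF mult_left_le])
next
  case False
  then show ?thesis using truncation_eq_0[of R x] R by simp
qed

lemma F_class_truncation_lipschitz:
  fixes f :: "'a::euclidean_space \<Rightarrow> real"
  assumes f: "f \<in> F_class q" and q: "1 \<le> q" and x: "norm x \<le> R + 1" and y: "norm y \<le> R + 1"
  shows "\<bar>truncation R f x - truncation R f y\<bar>
    \<le> (1 + 2 * npow (R + 1) (q - 1) + (2 * (R + 1) + (R + 1) powr q)) * norm (x - y)"
proof -
  have "truncation R f x - truncation R f y
      = (f x - f y) * cutoff R x + (f y - f 0) * (cutoff R x - cutoff R y)"
    by (simp add: truncation_def algebra_simps)
  also have "\<bar>\<dots>\<bar> \<le> \<bar>f x - f y\<bar> * \<bar>cutoff R x\<bar> + \<bar>f y - f 0\<bar> * \<bar>cutoff R x - cutoff R y\<bar>"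
    using abs_triangle_ineq[of "(f x - f y) * cutoff R x" "(f y - f 0) * (cutoff R x - cutoff R y)"]
    by (simp add: abs_mult)
  also have "\<dots> \<le> \<bar>f x - f y\<bar> * 1 + \<bar>f y - f 0\<bar> * \<bar>cutoff R x - cutoff R y\<bar>"
    using cutoff_nonneg[of R x] cutoff_le_1[of R x] by (intro add_mono mult_left_mono) auto
  also have "\<dots> \<le> (1 + 2 * npow (R + 1) (q - 1)) * norm (x - y)
      + (2 * (R + 1) + (R + 1) powr q) * norm (x - y)"
  proof (rule add_mono)
    show "\<bar>f x - f y\<bar> * 1 \<le> (1 + 2 * npow (R + 1) (q - 1)) * norm (x - y)"
    proof -
      have "1 + npow (norm x) (q - 1) + npow (norm y) (q - 1) \<le> 1 + 2 * npow (R + 1) (q - 1)"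
        using npow_mono[OF norm_ge_zero x, of "q - 1"] npow_mono[OF norm_ge_zero y, of "q - 1"] q
        by simp
      from order_trans[OF F_class_pseudo_lipschitz[OF f, of x y] mult_right_mono[OF this norm_ge_zero]]
      show ?thesis by simp
    qed
    have "\<bar>f y - f 0\<bar> \<le> 2 * (R + 1) + (R + 1) powr q"
      using F_class_growth[OF f q, of y] powr_mono2[of q "norm y" "R + 1"] y q by auto
    then show "\<bar>f y - f 0\<bar> * \<bar>cutoff R x - cutoff R y\<bar> \<le> (2 * (R + 1) + (R + 1) powr q) * norm (x - y)"
      using cutoff_lipschitz[of R x y] by (intro mult_mono) auto
  qed
  finally show ?thesis by (simp add: algebra_simps)
qed

lemma integral_F_class_near_truncation:
  fixes f :: "'a::euclidean_space \<Rightarrow> real"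
  assumes M: "M \<in> P_class q" and f: "f \<in> F_class q" and q: "1 \<le> q" and R: "1 \<le> R"
  shows "\<bar>(\<integral>x. f x \<partial>M) - f 0 - (\<integral>x. truncation R f x \<partial>M)\<bar>
    \<le> 3 * (\<integral>x. norm x powr q * (1 - cutoff R x) \<partial>M)"
proof -
  interpret prob_space M by (rule P_classD(1)[OF M])
  have fi: "integrable M (\<lambda>x. f x - f 0)" using F_class_integrable[OF f q M] by simp
  have "(\<integral>x. f x \<partial>M) - f 0 = (\<integral>x. f x - f 0 \<partial>M)"
    using F_class_integrable[OF f q M] by (simp add: prob_space)
  moreover have "\<bar>(\<integral>x. f x - f 0 \<partial>M) - (\<integral>x. (f x - f 0) * cutoff R x \<partial>M)\<bar>
      \<le> 3 * (\<integral>x. norm x powr q * (1 - cutoff R x) \<partial>M)"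
  proof (rule integral_minus_integral_mult_cutoff_le[OF M fi _ P_classD(3)[OF M]])
    show "continuous_on UNIV (\<lambda>x. f x - f 0)" by (intro continuous_intros F_class_continuous[OF f])
    show "continuous_on UNIV (\<lambda>x::'a. norm x powr q)" using q by (intro continuous_on_norm_powr) simp
    show "\<bar>f x - f 0\<bar> * (1 - cutoff R x) \<le> 3 * (norm x powr q * (1 - cutoff R x))" for x
      using mult_right_mono[OF F_class_growth[OF f q, of x], of "1 - cutoff R x"]
        growth_mult_tail_le[OF q R, of x] cutoff_le_1[of R x] by simp
  qed
  ultimately show ?thesis by (simp add: truncation_def)
qed


lemma finite_net_of_F_class_truncations:
  fixes R :: real
  assumes q: "1 \<le> q" and R: "0 \<le> R" and e: "0 < e"
  obtains N where "finite N" "N \<subseteq> truncation R ` (F_class q :: ('a::euclidean_space \<Rightarrow> real) set)"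
    "\<And>f. f \<in> F_class q \<Longrightarrow> \<exists>h\<in>N. \<forall>x. \<bar>truncation R f x - h x\<bar> \<le> e"
proof -
  define M where "M = 2 * (R + 1) + (R + 1) powr q"
  define L where "L = 1 + 2 * npow (R + 1) (q - 1) + M"
  obtain N where "finite N" "N \<subseteq> truncation R ` F_class q"
    "\<And>g. g \<in> truncation R ` F_class q \<Longrightarrow> \<exists>h\<in>N. \<forall>x::'a. \<bar>g x - h x\<bar> \<le> e"
  proof (rule finite_uniform_net[of "truncation R ` F_class q" M "R + 1" L e])
    show "\<bar>g x\<bar> \<le> M" if "g \<in> truncation R ` F_class q" for g x
      using that F_class_truncation_bounded[OF _ q R] by (auto simp: M_def)
    show "\<bar>g x - g y\<bar> \<le> L * norm (x - y)"
      if "g \<in> truncation R ` F_class q" "norm x \<le> R + 1" "norm y \<le> R + 1" for g x y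
      using that F_class_truncation_lipschitz[OF _ q] by (auto simp: L_def M_def)
    show "g x = 0" if "g \<in> truncation R ` F_class q" "R + 1 < norm x" for g x
      using that truncation_eq_0[of R x] by auto
    show "0 \<le> L"
      using R by (simp add: L_def M_def npow_nonneg add_nonneg_nonneg)
  qed (use e in auto)
  then show ?thesis using that by blast
qed

lemma integral_F_class_tendsto_uniformly:
  fixes Q :: "nat \<Rightarrow> 'a::euclidean_space measure"
  assumes q: "1 \<le> q" and P: "P \<in> P_class q" and Q: "\<And>n. Q n \<in> P_class q"
    and wc: "weak_conv Q P" and tails: "uniform_tails (\<lambda>x. norm x powr q) Q P" and e: "0 < e"
  shows "\<exists>N. \<forall>n\<ge>N. \<forall>f\<in>F_class q. \<bar>(\<integral>x. f x \<partial>Q n) - (\<integral>x. f x \<partial>P)\<bar> \<le> 9 * e"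
proof -
  let ?tail = "\<lambda>R M. \<integral>x. norm x powr q * (1 - cutoff R x) \<partial>M"
  obtain R0 where R0: "\<And>n. ?tail R0 (Q n) \<le> e" "?tail R0 P \<le> e"
    using tails e unfolding uniform_tails_def by blast
  define R where "R = max R0 1"
  have R: "1 \<le> R" "R0 \<le> R" by (simp_all add: R_def)
  have tail: "?tail R M \<le> e" if "M \<in> P_class q" "?tail R0 M \<le> e" for M :: "'a measure"
  proof -
    have "continuous_on UNIV (\<lambda>x::'a. norm x powr q)" using q by (intro continuous_on_norm_powr) simp
    from integral_tail_antimono[OF that(1) P_classD(3)[OF that(1)] this _ R(2)] that(2)
    show ?thesis by simp
  qed
  obtain N where N: "finite N" "N \<subseteq> truncation R ` F_class q"
    "\<And>f. f \<in> F_class q \<Longrightarrow> \<exists>h\<in>N. \<forall>x::'a. \<bar>truncation R f x - h x\<bar> \<le> e"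
    using finite_net_of_F_class_truncations[OF q _ e, of R] R(1) by auto
  have bounded: "\<bar>truncation R f x\<bar> \<le> 2 * (R + 1) + (R + 1) powr q" if "f \<in> F_class q" for f x
    using F_class_truncation_bounded[OF that q] R(1) by simp
  have int: "integrable M (truncation R f)" if "f \<in> F_class q" "M \<in> P_class q" for f M
    by (rule P_class_integrable_bounded[OF that(2) continuous_on_truncation bounded[OF that(1)]])
       (rule F_class_continuous[OF that(1)])
  have "continuous_on UNIV h \<and> (\<forall>x. \<bar>h x\<bar> \<le> 2 * (R + 1) + (R + 1) powr q)" if "h \<in> N" for h
    using that N(2) bounded continuous_on_truncation[OF F_class_continuous] by blast
  then obtain n0 where n0: "\<And>n h. n0 \<le> n \<Longrightarrow> h \<in> N \<Longrightarrow> \<bar>(\<integral>x. h x \<partial>Q n) - (\<integral>x. h x \<partial>P)\<bar> < e"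
    using weak_conv_eventually_uniform_on_finite[OF wc N(1) _ e] by meson
  have "\<bar>(\<integral>x. f x \<partial>Q n) - (\<integral>x. f x \<partial>P)\<bar> \<le> 9 * e" if n: "n0 \<le> n" and f: "f \<in> F_class q" for n f
  proof -
    obtain h where h: "h \<in> N" "\<And>x. \<bar>truncation R f x - h x\<bar> \<le> e" using N(3)[OF f] by blast
    obtain f' where f': "f' \<in> F_class q" "h = truncation R f'" using h(1) N(2) by blast
    have near: "\<bar>(\<integral>x. f x \<partial>M) - f 0 - (\<integral>x. h x \<partial>M)\<bar> \<le> 4 * e"
      if M: "M \<in> P_class q" "?tail R M \<le> e" for M
    proof -
      interpret prob_space M by (rule P_classD(1)[OF M(1)])
      have "\<bar>(\<integral>x. f x \<partial>M) - f 0 - (\<integral>x. truncation R f x \<partial>M)\<bar> \<le> 3 * ?tail R M"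
        by (rule integral_F_class_near_truncation[OF M(1) f q R(1)])
      moreover have "\<bar>(\<integral>x. truncation R f x \<partial>M) - (\<integral>x. h x \<partial>M)\<bar> \<le> (\<integral>x. e \<partial>M)"
        using int[OF f M(1)] int[OF f'(1) M(1)] h(2) f'(2) by (intro abs_integral_diff_le) auto
      then have "\<bar>(\<integral>x. truncation R f x \<partial>M) - (\<integral>x. h x \<partial>M)\<bar> \<le> e"
        by (simp add: prob_space)
      ultimately show ?thesis using M(2) by linarith
    qed
    show ?thesis
      using near[OF Q tail[OF Q R0(1)], of n] near[OF P tail[OF P R0(2)]] n0[OF n h(1)]
      unfolding abs_le_iff abs_less_iff by linarith
  qed
  then show ?thesis by blast
qed

lemma d_F_tendsto_0_if_weak_conv_moments:
  fixes Q :: "nat \<Rightarrow> 'a::euclidean_space measure"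
  assumes q: "1 \<le> q" and P: "P \<in> P_class q" and Q: "\<And>n. Q n \<in> P_class q"
    and wc: "weak_conv Q P"
    and moments: "(\<lambda>n. \<integral>x. norm x powr q \<partial>Q n) \<longlonglongrightarrow> (\<integral>x. norm x powr q \<partial>P)"
  shows "(\<lambda>n. d_F q (Q n) P) \<longlonglongrightarrow> 0"
proof (rule LIMSEQ_I)
  fix r :: real assume r: "0 < r"
  have "uniform_tails (\<lambda>x. norm x powr q) Q P"
    using q P_classD(3)[OF Q] P_classD(3)[OF P]
    by (intro uniform_tails_if_integral_tendsto[OF P Q wc _ _ _ _ moments] continuous_on_norm_powr) auto
  then obtain N where N: "\<And>n f. N \<le> n \<Longrightarrow> f \<in> F_class q \<Longrightarrow> \<bar>(\<integral>x. f x \<partial>Q n) - (\<integral>x. f x \<partial>P)\<bar> \<le> 9 * (r / 18)"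
    using integral_F_class_tendsto_uniformly[OF q P Q wc, of "r / 18"] r by auto
  have "norm (d_F q (Q n) P - 0) < r" if "N \<le> n" for n
  proof -
    have "d_F q (Q n) P \<le> 9 * (r / 18)" by (rule d_F_le) (rule N[OF that])
    then show ?thesis using d_F_nonneg[OF q Q P] r by simp
  qed
  then show "\<exists>N. \<forall>n\<ge>N. norm (d_F q (Q n) P - 0) < r" by blast
qed


section \<open>Convergence in d_F implies weak convergence\<close>

inductive_set trig_poly :: "('a::euclidean_space \<Rightarrow> real) set" where
  cosI: "(\<lambda>x. cos (t \<bullet> x)) \<in> trig_poly"
| sinI: "(\<lambda>x. sin (t \<bullet> x)) \<in> trig_poly"
| addI: "f \<in> trig_poly \<Longrightarrow> g \<in> trig_poly \<Longrightarrow> (\<lambda>x. f x + g x) \<in> trig_poly"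
| scaleI: "f \<in> trig_poly \<Longrightarrow> (\<lambda>x. c * f x) \<in> trig_poly"

lemma trig_poly_const: "(\<lambda>x. c) \<in> trig_poly"
  using trig_poly.scaleI[OF trig_poly.cosI[of 0], of c] by simp

lemma trig_poly_sum:
  "finite I \<Longrightarrow> (\<And>i. i \<in> I \<Longrightarrow> f i \<in> trig_poly) \<Longrightarrow> (\<lambda>x. \<Sum>i\<in>I. f i x) \<in> trig_poly"
  by (induction I rule: finite_induct) (auto intro: trig_poly_const trig_poly.addI)

lemma trig_poly_mult_cos_sin:
  assumes "f \<in> trig_poly"
  shows "(\<lambda>x. cos (s \<bullet> x) * f x) \<in> trig_poly \<and> (\<lambda>x. sin (s \<bullet> x) * f x) \<in> trig_poly"
  using assms
proof induction
  case (cosI t)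
  have eq: "(\<lambda>x. cos (s \<bullet> x) * cos (t \<bullet> x)) = (\<lambda>x. (1/2) * cos ((s + t) \<bullet> x) + (1/2) * cos ((s - t) \<bullet> x))"
    "(\<lambda>x. sin (s \<bullet> x) * cos (t \<bullet> x)) = (\<lambda>x. (1/2) * sin ((s + t) \<bullet> x) + (1/2) * sin ((s - t) \<bullet> x))"
    by (auto simp: fun_eq_iff inner_add_left inner_diff_left cos_add cos_diff sin_add sin_diff algebra_simps)
  show ?case unfolding eq by (intro conjI trig_poly.intros)
next
  case (sinI t)
  have eq: "(\<lambda>x. cos (s \<bullet> x) * sin (t \<bullet> x)) = (\<lambda>x. (1/2) * sin ((s + t) \<bullet> x) + (-1/2) * sin ((s - t) \<bullet> x))"
    "(\<lambda>x. sin (s \<bullet> x) * sin (t \<bullet> x)) = (\<lambda>x. (-1/2) * cos ((s + t) \<bullet> x) + (1/2) * cos ((s - t) \<bullet> x))"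
    by (auto simp: fun_eq_iff inner_add_left inner_diff_left cos_add cos_diff sin_add sin_diff algebra_simps)
  show ?case unfolding eq by (intro conjI trig_poly.intros)
next
  case (addI f g)
  then show ?case
    using trig_poly.addI[of "\<lambda>x. cos (s \<bullet> x) * f x" "\<lambda>x. cos (s \<bullet> x) * g x"]
      trig_poly.addI[of "\<lambda>x. sin (s \<bullet> x) * f x" "\<lambda>x. sin (s \<bullet> x) * g x"]
    by (simp add: distrib_left)
next
  case (scaleI f c)
  then show ?case
    using trig_poly.scaleI[of "\<lambda>x. cos (s \<bullet> x) * f x" c] trig_poly.scaleI[of "\<lambda>x. sin (s \<bullet> x) * f x" c]
    by (simp add: mult.left_commute)
qed

lemma trig_poly_mult: "f \<in> trig_poly \<Longrightarrow> g \<in> trig_poly \<Longrightarrow> (\<lambda>x. f x * g x) \<in> trig_poly"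
proof (induction rule: trig_poly.induct)
  case (addI f1 f2)
  then show ?case using trig_poly.addI by (simp add: distrib_right)
next
  case (scaleI f c)
  then show ?case using trig_poly.scaleI[of _ c] by (simp add: mult.assoc)
qed (use trig_poly_mult_cos_sin in blast)+

lemma trig_poly_continuous: "f \<in> trig_poly \<Longrightarrow> continuous_on UNIV f"
  by (induction rule: trig_poly.induct) (auto intro!: continuous_intros)

lemma trig_poly_bounded: "f \<in> trig_poly \<Longrightarrow> \<exists>B. \<forall>x. \<bar>f x\<bar> \<le> B"
proof (induction rule: trig_poly.induct)
  case (addI f g)
  then obtain B1 B2 where "\<And>x. \<bar>f x\<bar> \<le> B1" "\<And>x. \<bar>g x\<bar> \<le> B2" by blast
  then show ?case by (intro exI[of _ "B1 + B2"]) (auto intro: order_trans[OF abs_triangle_ineq] add_mono)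
next
  case (scaleI f c)
  then obtain B where "\<And>x. \<bar>f x\<bar> \<le> B" by blast
  then show ?case by (intro exI[of _ "\<bar>c\<bar> * B"]) (auto simp: abs_mult intro: mult_left_mono)
qed (auto intro: exI[of _ 1])

lemma trig_poly_polynomial_of_sines:
  fixes w :: "'a::euclidean_space \<Rightarrow> 'a"
  shows "real_polynomial_function p \<Longrightarrow> (\<lambda>x. p (\<Sum>b\<in>Basis. sin (w b \<bullet> x) *\<^sub>R b)) \<in> trig_poly"
proof (induction rule: real_polynomial_function.induct)
  case (linear f)
  have "(\<lambda>x. \<Sum>b\<in>(Basis::'a set). f b * sin (w b \<bullet> x)) \<in> trig_poly"
    by (intro trig_poly_sum trig_poly.scaleI trig_poly.sinI) auto
  moreover have "f (\<Sum>b\<in>Basis. sin (w b \<bullet> x) *\<^sub>R b) = (\<Sum>b\<in>Basis. f b * sin (w b \<bullet> x))" for x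
    using bounded_linear.linear[OF linear]
    by (simp add: linear_sum linear_cmul mult.commute)
  ultimately show ?case by simp
qed (auto intro: trig_poly_const trig_poly.addI trig_poly_mult)

lemma ridge_profile_cos: "ridge_profile r cos"
  by (rule ridge_profileI[where \<psi>' = "\<lambda>s. - sin s" and \<psi>'' = "\<lambda>s. - cos s" and \<psi>''' = sin and B = 1])
     (auto intro!: derivative_eq_intros continuous_intros
       intro: order_trans[OF abs_sin_le_one] order_trans[OF abs_cos_le_one] simp: npow_nonneg)

lemma ridge_profile_sin: "ridge_profile r sin"
  by (rule ridge_profileI[where \<psi>' = cos and \<psi>'' = "\<lambda>s. - sin s" and \<psi>''' = "\<lambda>s. - cos s" and B = 1])
     (auto intro!: derivative_eq_intros continuous_intros
       intro: order_trans[OF abs_sin_le_one] order_trans[OF abs_cos_le_one] simp: npow_nonneg)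

lemma integrable_trig_poly: "M \<in> P_class q \<Longrightarrow> f \<in> trig_poly \<Longrightarrow> integrable M f"
  using trig_poly_bounded P_class_integrable_bounded trig_poly_continuous by metis

lemma integral_trig_poly_tendsto_if_d_F_tendsto_0:
  fixes Q :: "nat \<Rightarrow> 'a::euclidean_space measure"
  assumes q: "1 \<le> q" and P: "P \<in> P_class q" and Q: "\<And>n. Q n \<in> P_class q"
    and d: "(\<lambda>n. d_F q (Q n) P) \<longlonglongrightarrow> 0"
  shows "f \<in> trig_poly \<Longrightarrow> (\<lambda>n. \<integral>x. f x \<partial>Q n) \<longlonglongrightarrow> (\<integral>x. f x \<partial>P)"
proof (induction rule: trig_poly.induct)
  case (addI f g)
  show ?case
    using tendsto_add[OF addI.IH] integrable_trig_poly[OF Q] integrable_trig_poly[OF P] addI.hyps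
    by simp
next
  case (scaleI f c)
  then show ?case by (simp add: tendsto_mult_left)
qed (auto intro: integral_ridge_tendsto_if_d_F_tendsto_0[OF q P Q d] ridge_profile_cos ridge_profile_sin)

definition tail_profile :: "real \<Rightarrow> real" where
  "tail_profile y = y^2 / (1 + y^2)"

lemma one_plus_square_pos: "0 < 1 + (y::real)^2"
  by (simp add: add_pos_nonneg)

lemma abs_le_one_plus_square: "\<bar>y\<bar> \<le> 1 + (y::real)^2"
proof (cases "\<bar>y\<bar> \<le> 1")
  case False
  then have "\<bar>y\<bar> * 1 \<le> \<bar>y\<bar> * \<bar>y\<bar>" by (intro mult_left_mono) auto
  then show ?thesis by (simp add: power2_eq_square abs_mult[symmetric])
next
  case True
  moreover have "0 \<le> y^2" by simp
  ultimately show ?thesis by linarith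
qed

lemma tail_profile_has_derivatives:
  fixes y :: real
  shows "(tail_profile has_real_derivative 2 * y / (1 + y^2)^2) (at y)"
    and "((\<lambda>y. 2 * y / (1 + y^2)^2) has_real_derivative (2 - 6 * y^2) / (1 + y^2)^3) (at y)"
    and "((\<lambda>y. (2 - 6 * y^2) / (1 + y^2)^3) has_real_derivative (24 * y^3 - 24 * y) / (1 + y^2)^4) (at y)"
proof -
  let ?w = "1 + y^2"
  have w: "?w \<noteq> 0" using one_plus_square_pos[of y] by auto
  have "(tail_profile has_real_derivative ((2 * y) * ?w - y^2 * (2 * y)) / (?w * ?w)) (at y)"
    unfolding tail_profile_def[abs_def] using w by (intro DERIV_divide) (auto intro!: derivative_eq_intros)
  then show "(tail_profile has_real_derivative 2 * y / ?w^2) (at y)"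
    by (simp add: power2_eq_square algebra_simps)
  have "((\<lambda>y. 2 * y / (1 + y^2)^2) has_real_derivative
      (2 * ?w^2 - (2 * y) * (2 * ?w * (2 * y))) / (?w^2 * ?w^2)) (at y)"
    using w by (intro DERIV_divide) (auto intro!: derivative_eq_intros simp: add_nonneg_eq_0_iff)
  moreover have "(2 * ?w^2 - (2 * y) * (2 * ?w * (2 * y))) / (?w^2 * ?w^2) = (2 - 6 * y^2) / ?w^3"
    using w by (simp add: divide_simps) algebra
  ultimately show "((\<lambda>y. 2 * y / (1 + y^2)^2) has_real_derivative (2 - 6 * y^2) / ?w^3) (at y)"
    by simp
  have "((\<lambda>y. (2 - 6 * y^2) / (1 + y^2)^3) has_real_derivative
      ((- (6 * (2 * y))) * ?w^3 - (2 - 6 * y^2) * (3 * ?w^2 * (2 * y))) / (?w^3 * ?w^3)) (at y)"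
    using w by (intro DERIV_divide) (auto intro!: derivative_eq_intros simp: add_nonneg_eq_0_iff)
  moreover have "((- (6 * (2 * y))) * ?w^3 - (2 - 6 * y^2) * (3 * ?w^2 * (2 * y))) / (?w^3 * ?w^3)
      = (24 * y^3 - 24 * y) / ?w^4"
    using w by (simp add: divide_simps) algebra
  ultimately show "((\<lambda>y. (2 - 6 * y^2) / (1 + y^2)^3) has_real_derivative (24 * y^3 - 24 * y) / ?w^4) (at y)"
    by simp
qed

lemma tail_profile_derivatives_le:
  fixes y :: real
  shows "\<bar>2 * y / (1 + y^2)^2\<bar> \<le> 24" and "\<bar>(2 - 6 * y^2) / (1 + y^2)^3\<bar> \<le> 24"
    and "\<bar>(24 * y^3 - 24 * y) / (1 + y^2)^4\<bar> \<le> 24"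
proof -
  let ?w = "1 + y^2"
  have pow: "?w \<le> ?w ^ k" if "0 < k" for k
    using power_increasing[of 1 k ?w] that by simp
  have "\<bar>2 * y\<bar> \<le> 24 * ?w^2"
    using abs_le_one_plus_square[of y] pow[of 2] by simp
  moreover have "\<bar>2 - 6 * y^2\<bar> \<le> 24 * ?w^3"
  proof -
    have "\<bar>2 - 6 * y^2\<bar> \<le> 6 * ?w" by (simp add: abs_le_iff)
    then show ?thesis using pow[of 3] by simp
  qed
  moreover have "\<bar>24 * y^3 - 24 * y\<bar> \<le> 24 * ?w^4"
  proof -
    have "24 * y^3 - 24 * y = 24 * (y * (y^2 - 1))"
      by (simp add: algebra_simps power3_eq_cube power2_eq_square)
    then have "\<bar>24 * y^3 - 24 * y\<bar> = 24 * (\<bar>y\<bar> * \<bar>y^2 - 1\<bar>)"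
      by (simp add: abs_mult)
    also have "\<dots> \<le> 24 * (?w * ?w)"
      using abs_le_one_plus_square[of y] by (intro mult_left_mono mult_mono) (auto simp: abs_le_iff)
    also have "\<dots> \<le> 24 * ?w^4"
      using power_increasing[of 2 4 ?w] by (simp add: power2_eq_square)
    finally show ?thesis .
  qed
  ultimately show "\<bar>2 * y / ?w^2\<bar> \<le> 24" "\<bar>(2 - 6 * y^2) / ?w^3\<bar> \<le> 24"
    "\<bar>(24 * y^3 - 24 * y) / ?w^4\<bar> \<le> 24"
    using one_plus_square_pos[of y] by (simp_all add: abs_divide divide_le_eq)
qed

lemma ridge_profile_tail_profile: "ridge_profile r tail_profile"
proof (rule ridge_profileI[OF tail_profile_has_derivatives, where B = 24])
  fix s :: real
  have "24 \<le> 24 * (1 + npow \<bar>s\<bar> r)" using npow_nonneg[of "\<bar>s\<bar>" r] by simp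
  then show "\<bar>2 * s / (1 + s^2)^2\<bar> \<le> 24 * (1 + npow \<bar>s\<bar> r)"
    "\<bar>(2 - 6 * s^2) / (1 + s^2)^3\<bar> \<le> 24 * (1 + npow \<bar>s\<bar> r)"
    "\<bar>(24 * s^3 - 24 * s) / (1 + s^2)^4\<bar> \<le> 24 * (1 + npow \<bar>s\<bar> r)"
    using tail_profile_derivatives_le[of s] by (meson order_trans)+
next
  show "continuous_on UNIV (\<lambda>y::real. (24 * y^3 - 24 * y) / (1 + y^2)^4)"
    by (intro continuous_intros) (simp add: add_nonneg_eq_0_iff)
qed

lemma tail_profile_nonneg: "0 \<le> tail_profile y" and tail_profile_le_1: "tail_profile y \<le> 1"
  unfolding tail_profile_def using one_plus_square_pos[of y] by (auto simp: divide_le_eq)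

lemma tail_profile_eq: "tail_profile y = 1 - 1 / (1 + y^2)"
  unfolding tail_profile_def using one_plus_square_pos[of y] by (simp add: field_simps)

lemma tail_profile_mono: "\<bar>y\<bar> \<le> \<bar>z\<bar> \<Longrightarrow> tail_profile y \<le> tail_profile z"
  unfolding tail_profile_eq using one_plus_square_pos[of y]
  by (auto simp: abs_le_square_iff intro!: divide_left_mono)

lemma tail_profile_ge_half: "1 \<le> \<bar>y\<bar> \<Longrightarrow> 1 / 2 \<le> tail_profile y"
  using tail_profile_mono[of 1 y] by (simp add: tail_profile_def)

lemma continuous_on_tail_profile: "continuous_on UNIV tail_profile"
  unfolding tail_profile_def by (intro continuous_intros) (simp add: add_nonneg_eq_0_iff)

definition coordinate_tail :: "real \<Rightarrow> 'a::euclidean_space \<Rightarrow> real" where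
  "coordinate_tail L x = (\<Sum>b\<in>Basis. tail_profile ((x \<bullet> b) / L))"

lemma continuous_on_coordinate_tail: "continuous_on UNIV (coordinate_tail L)"
  unfolding coordinate_tail_def divide_inverse
  by (intro continuous_intros continuous_on_compose2[OF continuous_on_tail_profile]) auto

lemma coordinate_tail_bounds:
  fixes x :: "'a::euclidean_space"
  shows "0 \<le> coordinate_tail L x" "coordinate_tail L x \<le> DIM('a)"
proof -
  show "0 \<le> coordinate_tail L x"
    unfolding coordinate_tail_def by (intro sum_nonneg) (simp add: tail_profile_nonneg)
  have "coordinate_tail L x \<le> (\<Sum>b\<in>(Basis::'a set). 1)"
    unfolding coordinate_tail_def by (intro sum_mono) (simp add: tail_profile_le_1)
  then show "coordinate_tail L x \<le> DIM('a)" by simp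
qed

lemma abs_coordinate_tail_le: "\<bar>coordinate_tail L x\<bar> \<le> DIM('a)" for x :: "'a::euclidean_space"
  using coordinate_tail_bounds[of L x] by simp

lemma coordinate_tail_ge_half:
  assumes b: "b \<in> Basis" and x: "L \<le> \<bar>x \<bullet> b\<bar>" and L: "0 < L"
  shows "1 / 2 \<le> coordinate_tail L x"
proof -
  have "1 \<le> \<bar>x \<bullet> b\<bar> / L" using x L by simp
  then have "1 / 2 \<le> tail_profile ((x \<bullet> b) / L)"
    using L by (intro tail_profile_ge_half) (simp only: abs_divide abs_of_pos)
  also have "\<dots> \<le> coordinate_tail L x"
    unfolding coordinate_tail_def using b by (intro member_le_sum) (auto simp: tail_profile_nonneg)
  finally show ?thesis .
qed

lemma coordinate_tail_antimono:
  assumes L: "0 < L" and LL: "L \<le> L'"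
  shows "coordinate_tail L' x \<le> coordinate_tail L x"
  unfolding coordinate_tail_def
proof (rule sum_mono, rule tail_profile_mono)
  fix b :: 'a
  have "0 < L'" using L LL by linarith
  have "\<bar>x \<bullet> b\<bar> / L' \<le> \<bar>x \<bullet> b\<bar> / L"
    by (rule divide_left_mono[OF LL abs_ge_zero mult_pos_pos[OF \<open>0 < L'\<close> L]])
  then show "\<bar>x \<bullet> b / L'\<bar> \<le> \<bar>x \<bullet> b / L\<bar>"
    by (simp only: abs_divide abs_of_pos[OF \<open>0 < L'\<close>] abs_of_pos[OF L])
qed

lemma coordinate_tail_tendsto_0: "(\<lambda>m. coordinate_tail (real m + 1) x) \<longlonglongrightarrow> 0"
proof -
  have "(\<lambda>m. tail_profile (x \<bullet> b / (real m + 1))) \<longlonglongrightarrow> tail_profile 0" for b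
  proof (rule isCont_tendsto_compose[of 0 tail_profile])
    show "isCont tail_profile 0"
      using continuous_on_tail_profile by (simp add: continuous_on_eq_continuous_at)
    show "(\<lambda>m. x \<bullet> b / (real m + 1)) \<longlonglongrightarrow> 0"
      by (intro tendsto_divide_0[OF tendsto_const] filterlim_at_top_imp_at_infinity
          filterlim_at_top_mono[OF filterlim_real_sequentially]) auto
  qed
  then have "(\<lambda>m. \<Sum>b\<in>(Basis::'a set). tail_profile (x \<bullet> b / (real m + 1))) \<longlonglongrightarrow> (\<Sum>b\<in>(Basis::'a set). 0)"
    by (intro tendsto_sum) (simp add: tail_profile_def)
  then show ?thesis by (simp add: coordinate_tail_def)
qed

lemma integral_coordinate_tail_tendsto_if_d_F_tendsto_0:
  fixes Q :: "nat \<Rightarrow> 'a::euclidean_space measure"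
  assumes q: "1 \<le> q" and P: "P \<in> P_class q" and Q: "\<And>n. Q n \<in> P_class q"
    and d: "(\<lambda>n. d_F q (Q n) P) \<longlonglongrightarrow> 0"
  shows "(\<lambda>n. \<integral>x. coordinate_tail L x \<partial>Q n) \<longlonglongrightarrow> (\<integral>x. coordinate_tail L x \<partial>P)"
proof -
  have int: "integrable M (\<lambda>x. tail_profile ((x \<bullet> b) / L))" if "M \<in> P_class q" for M and b :: 'a
    using tail_profile_nonneg tail_profile_le_1
    by (intro P_class_integrable_bounded[OF that, where a = 1])
       (auto simp: divide_inverse intro!: continuous_on_compose2[OF continuous_on_tail_profile] continuous_intros)
  have "(\<lambda>n. \<integral>x. tail_profile (((1 / L) *\<^sub>R b) \<bullet> x) \<partial>Q n) \<longlonglongrightarrow> (\<integral>x. tail_profile (((1 / L) *\<^sub>R b) \<bullet> x) \<partial>P)"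
    for b :: 'a
    by (rule integral_ridge_tendsto_if_d_F_tendsto_0[OF q P Q d ridge_profile_tail_profile])
  then have "(\<lambda>n. \<Sum>b\<in>Basis. \<integral>x. tail_profile ((x \<bullet> b) / L) \<partial>Q n)
      \<longlonglongrightarrow> (\<Sum>b\<in>Basis. \<integral>x. tail_profile ((x \<bullet> b) / L) \<partial>P)"
    by (intro tendsto_sum) (simp add: inner_commute)
  then show ?thesis
    unfolding coordinate_tail_def using int[OF Q] int[OF P] by (simp add: integral_sum)
qed

lemma tight_if_d_F_tendsto_0:
  fixes Q :: "nat \<Rightarrow> 'a::euclidean_space measure"
  assumes q: "1 \<le> q" and P: "P \<in> P_class q" and Q: "\<And>n. Q n \<in> P_class q"
    and d: "(\<lambda>n. d_F q (Q n) P) \<longlonglongrightarrow> 0" and e: "0 < e"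
  obtains L where "0 < L" "\<And>n. (\<integral>x. coordinate_tail L x \<partial>Q n) \<le> e" "(\<integral>x. coordinate_tail L x \<partial>P) \<le> e"
proof -
  have int: "integrable M (coordinate_tail L)" if "M \<in> P_class q" for M :: "'a measure" and L
    by (rule P_class_integrable_bounded[OF that continuous_on_coordinate_tail abs_coordinate_tail_le])
  have dct: "(\<lambda>m. \<integral>x. coordinate_tail (real m + 1) x \<partial>M) \<longlonglongrightarrow> 0" if M: "M \<in> P_class q" for M :: "'a measure"
  proof -
    interpret prob_space M by (rule P_classD(1)[OF M])
    have "(\<lambda>m. \<integral>x. coordinate_tail (real m + 1) x \<partial>M) \<longlonglongrightarrow> (\<integral>x. 0 \<partial>M)"
    proof (rule integral_dominated_convergence[where w = "\<lambda>x. DIM('a)"])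
      show "AE x in M. norm (coordinate_tail (real m + 1) x) \<le> DIM('a)" for m
        by (intro AE_I2) (simp add: abs_coordinate_tail_le)
      show "AE x in M. (\<lambda>m. coordinate_tail (real m + 1) x) \<longlonglongrightarrow> 0"
        by (simp add: coordinate_tail_tendsto_0)
      show "coordinate_tail (real m + 1) \<in> borel_measurable M" for m
        by (rule P_class_borel_measurable[OF M continuous_on_coordinate_tail])
    qed simp_all
    then show ?thesis by simp
  qed
  define T where "T n m = (\<integral>x. coordinate_tail (real m + 1) x \<partial>Q n)" for n m
  define S where "S m = (\<integral>x. coordinate_tail (real m + 1) x \<partial>P)" for m
  have "\<exists>m. (\<forall>n. T n m \<le> e) \<and> S m \<le> e"
  proof (rule uniformly_small_if_antimono_tendsto_0[OF _ _ _ _ e])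
    show "T n m' \<le> T n m" if "m \<le> m'" for n m m'
      unfolding T_def using that
      by (intro integral_mono[OF int[OF Q] int[OF Q]] coordinate_tail_antimono) auto
    show "(\<lambda>m. T n m) \<longlonglongrightarrow> 0" for n
      unfolding T_def by (rule dct[OF Q])
    show "S \<longlonglongrightarrow> 0"
      unfolding S_def by (rule dct[OF P])
    show "(\<lambda>n. T n m) \<longlonglongrightarrow> S m" for m
      unfolding T_def S_def by (rule integral_coordinate_tail_tendsto_if_d_F_tendsto_0[OF q P Q d])
  qed
  then obtain m where "\<forall>n. T n m \<le> e" "S m \<le> e" by blast
  then show ?thesis
    using that[of "real m + 1"] unfolding T_def S_def by simp
qed

text \<open>The sine chart is injective on the box [-L, L]^D.  Outside it the approximation error, at
  most 2 B, is absorbed by 4 B times the coordinate tail, which is at least 1/2 there.\<close>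

definition sine_chart :: "real \<Rightarrow> 'a::euclidean_space \<Rightarrow> 'a" where
  "sine_chart L x = (\<Sum>b\<in>Basis. sin (pi / (2 * L) * (x \<bullet> b)) *\<^sub>R b)"

lemma sine_chart_inner: "b \<in> Basis \<Longrightarrow> sine_chart L x \<bullet> b = sin (pi / (2 * L) * (x \<bullet> b))"
  by (simp add: sine_chart_def inner_sum_left inner_Basis if_distrib sum.delta' cong: if_cong)

lemma sine_chart_in_cube: "sine_chart L x \<in> cbox (- One) One"
  by (auto simp: mem_box sine_chart_inner inner_minus_left)

lemma trig_poly_polynomial_sine_chart:
  "real_polynomial_function p \<Longrightarrow> (\<lambda>x. p (sine_chart L x)) \<in> trig_poly"
  using trig_poly_polynomial_of_sines[of p "\<lambda>b. (pi / (2 * L)) *\<^sub>R b"]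
  by (simp add: sine_chart_def inner_commute)

lemma continuous_factor_through_sine_chart:
  fixes h :: "'a::euclidean_space \<Rightarrow> real"
  assumes h: "continuous_on UNIV h" and L: "0 < L"
  obtains G where "continuous_on (cbox (- One) One) G" "\<And>x. G (sine_chart L x) \<in> range h"
    "\<And>x. (\<forall>b\<in>Basis. \<bar>x \<bullet> b\<bar> \<le> L) \<Longrightarrow> G (sine_chart L x) = h x"
proof
  define G where "G y = h (\<Sum>b\<in>Basis. (2 * L / pi * arcsin (y \<bullet> b)) *\<^sub>R b)" for y :: 'a
  show "continuous_on (cbox (- One) One) G"
    unfolding G_def
    by (intro continuous_on_compose2[OF h] continuous_intros) (auto simp: mem_box inner_minus_left)
  show "G (sine_chart L x) \<in> range h" for x
    by (simp add: G_def)
  show "G (sine_chart L x) = h x" if box: "\<forall>b\<in>Basis. \<bar>x \<bullet> b\<bar> \<le> L" for x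
  proof -
    have "2 * L / pi * arcsin (sine_chart L x \<bullet> b) = x \<bullet> b" if b: "b \<in> Basis" for b
    proof -
      define \<theta> where "\<theta> = pi / (2 * L) * (x \<bullet> b)"
      have "\<bar>\<theta>\<bar> \<le> pi / (2 * L) * L"
        unfolding \<theta>_def abs_mult using box b L by (intro mult_mono) auto
      then have "\<bar>\<theta>\<bar> \<le> pi / 2" using L by simp
      then have "arcsin (sin \<theta>) = \<theta>"
        unfolding abs_le_iff by (intro arcsin_sin) auto
      then have "arcsin (sin (pi / (2 * L) * (x \<bullet> b))) = pi / (2 * L) * (x \<bullet> b)"
        by (simp add: \<theta>_def)
      then show ?thesis using L b by (simp add: sine_chart_inner)
    qed
    then show ?thesis
      by (simp add: G_def euclidean_representation cong: sum.cong)
  qed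
qed

lemma trig_poly_approximation:
  fixes h :: "'a::euclidean_space \<Rightarrow> real"
  assumes h: "continuous_on UNIV h" "\<And>x. \<bar>h x\<bar> \<le> B" and L: "0 < L" and \<epsilon>: "0 < \<epsilon>"
  obtains p where "p \<in> trig_poly" "\<And>x. \<bar>h x - p x\<bar> \<le> 4 * B * coordinate_tail L x + \<epsilon>"
proof -
  obtain G where G: "continuous_on (cbox (- One) One) G" "\<And>x. G (sine_chart L x) \<in> range h"
      "\<And>x. (\<forall>b\<in>Basis. \<bar>x \<bullet> b\<bar> \<le> L) \<Longrightarrow> G (sine_chart L x) = h x"
    using continuous_factor_through_sine_chart[OF h(1) L] by blast
  obtain p0 where p0: "real_polynomial_function p0"
      "\<And>y. y \<in> cbox (- One) One \<Longrightarrow> \<bar>G y - p0 y\<bar> < \<epsilon>"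
    using Stone_Weierstrass_real_polynomial_function[OF compact_cbox G(1) \<epsilon>] by blast
  have B: "0 \<le> B" using h(2)[of 0] by linarith
  have "\<bar>h x - p0 (sine_chart L x)\<bar> \<le> 4 * B * coordinate_tail L x + \<epsilon>" for x
  proof -
    have close: "\<bar>G (sine_chart L x) - p0 (sine_chart L x)\<bar> < \<epsilon>"
      by (rule p0(2)[OF sine_chart_in_cube])
    show ?thesis
    proof (cases "\<forall>b\<in>Basis. \<bar>x \<bullet> b\<bar> \<le> L")
      case True
      then show ?thesis
        using close G(3) B coordinate_tail_bounds(1)[of L x] by (simp add: add_increasing)
    next
      case False
      then obtain b where "b \<in> Basis" "L \<le> \<bar>x \<bullet> b\<bar>" by force
      then have "1 / 2 \<le> coordinate_tail L x" by (rule coordinate_tail_ge_half[OF _ _ L])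
      then have "2 * B \<le> 4 * B * coordinate_tail L x"
        using mult_left_mono[of "1 / 2" "coordinate_tail L x" "4 * B"] B by simp
      moreover obtain y where "G (sine_chart L x) = h y" using G(2)[of x] by blast
      then have "\<bar>h x - G (sine_chart L x)\<bar> \<le> 2 * B"
        using h(2)[of x] h(2)[of y] unfolding abs_le_iff by linarith
      ultimately show ?thesis
        using close abs_triangle_ineq[of "h x - G (sine_chart L x)" "G (sine_chart L x) - p0 (sine_chart L x)"]
        by simp
    qed
  qed
  then show ?thesis
    using that trig_poly_polynomial_sine_chart[OF p0(1)] by blast
qed

lemma weak_conv_if_d_F_tendsto_0:
  fixes Q :: "nat \<Rightarrow> 'a::euclidean_space measure"
  assumes q: "1 \<le> q" and P: "P \<in> P_class q" and Q: "\<And>n. Q n \<in> P_class q"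
    and d: "(\<lambda>n. d_F q (Q n) P) \<longlonglongrightarrow> 0"
  shows "weak_conv Q P"
  unfolding weak_conv_def
proof (intro allI impI, elim conjE)
  fix h :: "'a \<Rightarrow> real" assume hc: "continuous_on UNIV h" and "bounded (range h)"
  then obtain B where hB: "\<And>x. \<bar>h x\<bar> \<le> B" unfolding bounded_real by auto
  have B: "0 \<le> B" using hB[of 0] by linarith
  show "(\<lambda>n. \<integral>x. h x \<partial>Q n) \<longlonglongrightarrow> (\<integral>x. h x \<partial>P)"
  proof (rule tendsto_if_approximable)
    fix \<epsilon> :: real assume \<epsilon>: "0 < \<epsilon>"
    define e where "e = \<epsilon> / (2 * (4 * B + 1))"
    have e: "0 < e" "4 * B * e \<le> \<epsilon> / 2"
      using \<epsilon> B by (simp_all add: e_def field_simps)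
    obtain L where L: "0 < L" "\<And>n. (\<integral>x. coordinate_tail L x \<partial>Q n) \<le> e"
        "(\<integral>x. coordinate_tail L x \<partial>P) \<le> e"
      using tight_if_d_F_tendsto_0[OF q P Q d e(1)] by blast
    obtain p where p: "p \<in> trig_poly" "\<And>x. \<bar>h x - p x\<bar> \<le> 4 * B * coordinate_tail L x + \<epsilon> / 2"
      using trig_poly_approximation[OF hc hB L(1), of "\<epsilon> / 2"] \<epsilon> by auto
    have close: "\<bar>(\<integral>x. h x \<partial>M) - (\<integral>x. p x \<partial>M)\<bar> \<le> \<epsilon>"
      if M: "M \<in> P_class q" and tail: "(\<integral>x. coordinate_tail L x \<partial>M) \<le> e" for M
    proof -
      interpret prob_space M by (rule P_classD(1)[OF M])
      have ti: "integrable M (coordinate_tail L)"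
        by (rule P_class_integrable_bounded[OF M continuous_on_coordinate_tail abs_coordinate_tail_le])
      have "\<bar>(\<integral>x. h x \<partial>M) - (\<integral>x. p x \<partial>M)\<bar> \<le> (\<integral>x. 4 * B * coordinate_tail L x + \<epsilon> / 2 \<partial>M)"
        using P_class_integrable_bounded[OF M hc hB] integrable_trig_poly[OF M p(1)] ti p(2)
        by (intro abs_integral_diff_le) auto
      also have "\<dots> = 4 * B * (\<integral>x. coordinate_tail L x \<partial>M) + \<epsilon> / 2"
        using ti by (simp add: prob_space)
      also have "\<dots> \<le> \<epsilon>"
        using mult_left_mono[OF tail, of "4 * B"] B e(2) by simp
      finally show ?thesis .
    qed
    show "\<exists>b c. b \<longlonglongrightarrow> c \<and> (\<forall>n. \<bar>(\<integral>x. h x \<partial>Q n) - b n\<bar> \<le> \<epsilon>) \<and> \<bar>(\<integral>x. h x \<partial>P) - c\<bar> \<le> \<epsilon>"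
    proof (intro exI conjI allI)
      show "(\<lambda>n. \<integral>x. p x \<partial>Q n) \<longlonglongrightarrow> (\<integral>x. p x \<partial>P)"
        by (rule integral_trig_poly_tendsto_if_d_F_tendsto_0[OF q P Q d p(1)])
    qed (intro close P Q L)+
  qed
qed

section \<open>Convergence in d_F implies convergence of q-th moments\<close>

definition moment_profile :: "real \<Rightarrow> real \<Rightarrow> real" where
  "moment_profile q y = (1 + y^2) powr (q / 2)"

definition moment_profile' :: "real \<Rightarrow> real \<Rightarrow> real" where
  "moment_profile' q y = q * (y * (1 + y^2) powr (q / 2 - 1))"

definition moment_profile'' :: "real \<Rightarrow> real \<Rightarrow> real" where
  "moment_profile'' q y = q * (1 + y^2) powr (q / 2 - 1) + q * (q - 2) * (y^2 * (1 + y^2) powr (q / 2 - 2))"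

definition moment_profile''' :: "real \<Rightarrow> real \<Rightarrow> real" where
  "moment_profile''' q y = 3 * q * (q - 2) * (y * (1 + y^2) powr (q / 2 - 2))
     + q * (q - 2) * (q - 4) * (y^3 * (1 + y^2) powr (q / 2 - 3))"

lemma has_real_derivative_one_plus_square_powr:
  "((\<lambda>y. (1 + y^2) powr a) has_real_derivative a * (1 + y^2) powr (a - 1) * (2 * y)) (at y)"
proof -
  have "((\<lambda>z. z powr a) has_real_derivative a * (1 + y^2) powr (a - 1)) (at (1 + y^2))"
    by (rule has_real_derivative_powr) (rule one_plus_square_pos)
  moreover have "((\<lambda>y. 1 + y^2) has_real_derivative 2 * y) (at y)"
    by (auto intro!: derivative_eq_intros)
  ultimately show ?thesis
    using DERIV_chain2 by fastforce
qed

lemma has_real_derivative_power_mult_one_plus_square_powr: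
  "((\<lambda>y. y ^ k * (1 + y^2) powr a) has_real_derivative
     real k * y ^ (k - 1) * (1 + y^2) powr a + y ^ k * (a * (1 + y^2) powr (a - 1) * (2 * y))) (at y)"
  by (rule DERIV_mult[OF _ has_real_derivative_one_plus_square_powr, THEN DERIV_cong])
     (auto intro!: derivative_eq_intros)

lemma moment_profile_has_derivatives:
  "(moment_profile q has_real_derivative moment_profile' q y) (at y)"
  "(moment_profile' q has_real_derivative moment_profile'' q y) (at y)"
  "(moment_profile'' q has_real_derivative moment_profile''' q y) (at y)"
proof -
  show "(moment_profile q has_real_derivative moment_profile' q y) (at y)"
    using has_real_derivative_one_plus_square_powr[of "q / 2" y]
    by (simp add: moment_profile_def[abs_def] moment_profile'_def algebra_simps)
  have "(moment_profile' q has_real_derivative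
      q * (real 1 * y ^ (1 - 1) * (1 + y^2) powr (q / 2 - 1)
        + y ^ 1 * ((q / 2 - 1) * (1 + y^2) powr (q / 2 - 1 - 1) * (2 * y)))) (at y)"
    unfolding moment_profile'_def[abs_def]
    using DERIV_cmult[OF has_real_derivative_power_mult_one_plus_square_powr[of 1 "q / 2 - 1" y], of q]
    by simp
  then show "(moment_profile' q has_real_derivative moment_profile'' q y) (at y)"
    by (simp add: moment_profile''_def algebra_simps power2_eq_square)
  have "(moment_profile'' q has_real_derivative
      q * ((q / 2 - 1) * (1 + y^2) powr (q / 2 - 1 - 1) * (2 * y))
      + q * (q - 2) * (real 2 * y ^ (2 - 1) * (1 + y^2) powr (q / 2 - 2)
        + y ^ 2 * ((q / 2 - 2) * (1 + y^2) powr (q / 2 - 2 - 1) * (2 * y)))) (at y)"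
    unfolding moment_profile''_def[abs_def]
    by (intro DERIV_add DERIV_cmult has_real_derivative_one_plus_square_powr
        has_real_derivative_power_mult_one_plus_square_powr)
  then show "(moment_profile'' q has_real_derivative moment_profile''' q y) (at y)"
    by (simp add: moment_profile'''_def algebra_simps power2_eq_square power3_eq_cube)
qed

lemma abs_le_one_plus_square_powr_half: "\<bar>y\<bar> \<le> (1 + y^2) powr (1 / 2)" for y :: real
proof -
  have "\<bar>y\<bar> = sqrt (y^2)" by simp
  also have "\<dots> \<le> sqrt (1 + y^2)" by (rule real_sqrt_le_mono) simp
  finally show ?thesis using one_plus_square_pos[of y] by (simp add: powr_half_sqrt)
qed

lemma abs_power_mult_one_plus_square_powr_le:
  assumes "real k + 1 \<le> 2 * j"
  shows "\<bar>y\<bar> ^ k * (1 + y^2) powr (q / 2 - j) \<le> (1 + y^2) powr ((q - 1) / 2)"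
proof -
  let ?w = "1 + y^2"
  have "\<bar>y\<bar> ^ k \<le> (?w powr (1 / 2)) ^ k"
    by (rule power_mono[OF abs_le_one_plus_square_powr_half]) simp
  also have "\<dots> = ?w powr (real k / 2)"
    using one_plus_square_pos[of y] by (simp add: powr_realpow[symmetric] powr_powr)
  finally have "\<bar>y\<bar> ^ k * ?w powr (q / 2 - j) \<le> ?w powr (real k / 2) * ?w powr (q / 2 - j)"
    by (rule mult_right_mono) simp
  also have "\<dots> = ?w powr (q / 2 - j + real k / 2)"
    by (simp add: powr_add[symmetric] add.commute)
  also have "\<dots> \<le> ?w powr ((q - 1) / 2)"
    using assms by (intro powr_mono) (auto simp: field_simps)
  finally show ?thesis .
qed

lemma one_plus_square_powr_le:
  assumes r: "0 \<le> r"
  shows "(1 + t^2) powr (r / 2) \<le> 2 powr (r / 2) * (1 + npow \<bar>t\<bar> r)"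
proof (cases "\<bar>t\<bar> \<le> 1")
  case True
  then have "t^2 \<le> 1" by (simp add: abs_square_le_1)
  then have "(1 + t^2) powr (r / 2) \<le> 2 powr (r / 2)" using r by (intro powr_mono2) auto
  also have "\<dots> \<le> 2 powr (r / 2) * (1 + npow \<bar>t\<bar> r)" using npow_nonneg[of "\<bar>t\<bar>" r] by simp
  finally show ?thesis .
next
  case False
  then have "1 \<le> t^2" by (metis abs_le_square_iff abs_one one_power2 linear)
  then have "(1 + t^2) powr (r / 2) \<le> (2 * t^2) powr (r / 2)" using r by (intro powr_mono2) auto
  also have "\<dots> = 2 powr (r / 2) * (\<bar>t\<bar> powr 2) powr (r / 2)"
    using False by (simp add: powr_mult powr_realpow)
  also have "(\<bar>t\<bar> powr 2) powr (r / 2) = npow \<bar>t\<bar> r"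
    using False by (simp only: powr_powr) (simp add: npow_def)
  also have "2 powr (r / 2) * npow \<bar>t\<bar> r \<le> 2 powr (r / 2) * (1 + npow \<bar>t\<bar> r)" by simp
  finally show ?thesis .
qed

lemma moment_profile_derivatives_le:
  fixes q y :: real
  assumes q: "1 \<le> q"
  defines "K \<equiv> 3 * q * (1 + \<bar>q - 2\<bar>) * (1 + \<bar>q - 4\<bar>)"
  shows "\<bar>moment_profile' q y\<bar> \<le> K * (1 + y^2) powr ((q - 1) / 2)"
    and "\<bar>moment_profile'' q y\<bar> \<le> K * (1 + y^2) powr ((q - 1) / 2)"
    and "\<bar>moment_profile''' q y\<bar> \<le> K * (1 + y^2) powr ((q - 1) / 2)"
proof -
  let ?w = "1 + y^2" and ?W = "(1 + y^2) powr ((q - 1) / 2)"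
  have W: "\<bar>y\<bar> ^ k * ?w powr (q / 2 - j) \<le> ?W" if "real k + 1 \<le> 2 * j" for k j
    using abs_power_mult_one_plus_square_powr_le[OF that] .
  have W0: "0 \<le> ?W" by simp
  define a where "a = \<bar>q - 2\<bar>"
  define b where "b = \<bar>q - 4\<bar>"
  have ab: "0 \<le> a" "0 \<le> b" "0 \<le> q * a" "0 \<le> q * b" "0 \<le> q * a * b"
    using q by (simp_all add: a_def b_def)
  have K: "K = 3 * q + 3 * (q * a) + 3 * (q * b) + 3 * (q * a * b)"
    by (simp add: K_def a_def b_def algebra_simps)
  have "\<bar>moment_profile' q y\<bar> = q * (\<bar>y\<bar> ^ 1 * ?w powr (q / 2 - 1))"
    using q by (simp add: moment_profile'_def abs_mult)
  also have "\<dots> \<le> q * ?W" using W[of 1 1] q by (intro mult_left_mono) auto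
  also have "\<dots> \<le> K * ?W" using K ab q W0 by (intro mult_right_mono) auto
  finally show "\<bar>moment_profile' q y\<bar> \<le> K * ?W" .
  have "\<bar>moment_profile'' q y\<bar> \<le> q * (\<bar>y\<bar> ^ 0 * ?w powr (q / 2 - 1)) + q * a * (\<bar>y\<bar> ^ 2 * ?w powr (q / 2 - 2))"
    using q abs_triangle_ineq[of "q * ?w powr (q / 2 - 1)" "q * (q - 2) * (y^2 * ?w powr (q / 2 - 2))"]
    by (simp add: moment_profile''_def abs_mult a_def)
  also have "\<dots> \<le> q * ?W + q * a * ?W"
    using W[of 0 1] W[of 2 2] ab q by (intro add_mono mult_left_mono) auto
  also have "\<dots> \<le> K * ?W" using K ab q W0 by (simp add: algebra_simps mult_right_mono)
  finally show "\<bar>moment_profile'' q y\<bar> \<le> K * ?W" .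
  have "\<bar>moment_profile''' q y\<bar>
      \<le> 3 * q * a * (\<bar>y\<bar> ^ 1 * ?w powr (q / 2 - 2)) + q * a * b * (\<bar>y\<bar> ^ 3 * ?w powr (q / 2 - 3))"
    using q abs_triangle_ineq[of "3 * q * (q - 2) * (y * ?w powr (q / 2 - 2))"
      "q * (q - 2) * (q - 4) * (y^3 * ?w powr (q / 2 - 3))"]
    by (simp add: moment_profile'''_def abs_mult a_def b_def power_abs)
  also have "\<dots> \<le> 3 * q * a * ?W + q * a * b * ?W"
    using W[of 1 2] W[of 3 3] ab q by (intro add_mono mult_left_mono) auto
  also have "\<dots> \<le> K * ?W" using K ab q W0 by (simp add: algebra_simps mult_right_mono)
  finally show "\<bar>moment_profile''' q y\<bar> \<le> K * ?W" .
qed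

lemma ridge_profile_moment_profile:
  assumes q: "1 \<le> q"
  shows "ridge_profile (q - 1) (moment_profile q)"
proof -
  define K where "K = 3 * q * (1 + \<bar>q - 2\<bar>) * (1 + \<bar>q - 4\<bar>)"
  have K: "0 \<le> K" using q by (simp add: K_def)
  have growth: "\<bar>\<phi> y\<bar> \<le> (K * 2 powr ((q - 1) / 2)) * (1 + npow \<bar>y\<bar> (q - 1))"
    if \<phi>: "\<bar>\<phi> y\<bar> \<le> K * (1 + y^2) powr ((q - 1) / 2)" for \<phi> :: "real \<Rightarrow> real" and y
  proof -
    have "K * (1 + y^2) powr ((q - 1) / 2) \<le> K * (2 powr ((q - 1) / 2) * (1 + npow \<bar>y\<bar> (q - 1)))"
      using one_plus_square_powr_le[of "q - 1" y] q K by (intro mult_left_mono) auto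
    with \<phi> show ?thesis by (simp add: mult.assoc)
  qed
  have d: "\<bar>moment_profile' q y\<bar> \<le> K * (1 + y^2) powr ((q - 1) / 2)"
    "\<bar>moment_profile'' q y\<bar> \<le> K * (1 + y^2) powr ((q - 1) / 2)"
    "\<bar>moment_profile''' q y\<bar> \<le> K * (1 + y^2) powr ((q - 1) / 2)" for y
    unfolding K_def by (rule moment_profile_derivatives_le[OF q])+
  show ?thesis
  proof (rule ridge_profileI)
    show "(moment_profile q has_real_derivative moment_profile' q y) (at y)"
      "(moment_profile' q has_real_derivative moment_profile'' q y) (at y)"
      "(moment_profile'' q has_real_derivative moment_profile''' q y) (at y)" for y
      by (rule moment_profile_has_derivatives)+
    show "continuous_on UNIV (moment_profile''' q)"
      unfolding moment_profile'''_def[abs_def]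
      using one_plus_square_pos[THEN less_imp_neq, THEN not_sym] by (intro continuous_intros ballI)
    show "\<bar>moment_profile' q y\<bar> \<le> (K * 2 powr ((q - 1) / 2)) * (1 + npow \<bar>y\<bar> (q - 1))"
      "\<bar>moment_profile'' q y\<bar> \<le> (K * 2 powr ((q - 1) / 2)) * (1 + npow \<bar>y\<bar> (q - 1))"
      "\<bar>moment_profile''' q y\<bar> \<le> (K * 2 powr ((q - 1) / 2)) * (1 + npow \<bar>y\<bar> (q - 1))" for y
      by (rule growth, rule d)+
  qed
qed

definition moment_test :: "real \<Rightarrow> 'a::euclidean_space \<Rightarrow> real" where
  "moment_test q x = (\<Sum>b\<in>Basis. moment_profile q (x \<bullet> b))"

lemma continuous_on_moment_test: "continuous_on UNIV (moment_test q)"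
  unfolding moment_test_def moment_profile_def
  using one_plus_square_pos[THEN less_imp_neq, THEN not_sym]
  by (intro continuous_intros ballI)

lemma moment_test_nonneg: "0 \<le> moment_test q x"
  unfolding moment_test_def moment_profile_def by (simp add: sum_nonneg)

lemma moment_test_le:
  fixes x :: "'a::euclidean_space"
  assumes q: "0 < q"
  shows "moment_test q x \<le> DIM('a) * 2 powr (q / 2) + DIM('a) * 2 powr (q / 2) * norm x powr q"
proof -
  have "moment_profile q (x \<bullet> b) \<le> 2 powr (q / 2) * (1 + norm x powr q)" if "b \<in> Basis" for b
  proof -
    have "npow \<bar>x \<bullet> b\<bar> q \<le> npow (norm x) q"
      using that Basis_le_norm q by (intro npow_mono) auto
    then show ?thesis
      using one_plus_square_powr_le[of q "x \<bullet> b"] q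
      by (simp add: moment_profile_def npow_eq_powr order_trans)
  qed
  then have "moment_test q x \<le> (\<Sum>b\<in>(Basis::'a set). 2 powr (q / 2) * (1 + norm x powr q))"
    unfolding moment_test_def by (intro sum_mono)
  then show ?thesis by (simp add: algebra_simps)
qed

lemma norm_powr_le_moment_test:
  fixes x :: "'a::euclidean_space"
  assumes q: "0 < q"
  shows "norm x powr q \<le> DIM('a) powr q * moment_test q x"
proof -
  let ?m = "Max ((\<lambda>b. \<bar>x \<bullet> b\<bar>) ` (Basis::'a set))"
  have "?m \<in> (\<lambda>b. \<bar>x \<bullet> b\<bar>) ` Basis" by (rule Max_in) auto
  then obtain b where b: "b \<in> Basis" "?m = \<bar>x \<bullet> b\<bar>" by blast
  have max: "\<bar>x \<bullet> b'\<bar> \<le> \<bar>x \<bullet> b\<bar>" if "b' \<in> Basis" for b'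
    using Max_ge[of "(\<lambda>b. \<bar>x \<bullet> b\<bar>) ` (Basis::'a set)"] that b(2) by auto
  have "norm x \<le> (\<Sum>b'\<in>Basis. \<bar>x \<bullet> b'\<bar>)" by (rule norm_le_l1)
  also have "\<dots> \<le> DIM('a) * \<bar>x \<bullet> b\<bar>"
    using sum_mono[of Basis "\<lambda>b'. \<bar>x \<bullet> b'\<bar>" "\<lambda>_. \<bar>x \<bullet> b\<bar>"] max by simp
  finally have "norm x powr q \<le> (DIM('a) * \<bar>x \<bullet> b\<bar>) powr q"
    using q by (intro powr_mono2) auto
  also have "\<dots> = DIM('a) powr q * \<bar>x \<bullet> b\<bar> powr q" by (simp add: powr_mult)
  also have "\<bar>x \<bullet> b\<bar> powr q \<le> moment_profile q (x \<bullet> b)"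
  proof (cases "x \<bullet> b = 0")
    case False
    have square: "(x \<bullet> b)^2 = \<bar>x \<bullet> b\<bar> powr 2"
      using False by (simp add: powr_realpow[symmetric])
    have "\<bar>x \<bullet> b\<bar> powr q = (\<bar>x \<bullet> b\<bar> powr 2) powr (q / 2)"
      by (simp only: powr_powr) simp
    also have "\<dots> = ((x \<bullet> b)^2) powr (q / 2)"
      by (simp only: square)
    also have "\<dots> \<le> moment_profile q (x \<bullet> b)"
      using q by (simp add: moment_profile_def powr_mono2)
    finally show ?thesis .
  qed (simp add: moment_profile_def)
  also have "moment_profile q (x \<bullet> b) \<le> moment_test q x"
    unfolding moment_test_def moment_profile_def using b(1) by (intro member_le_sum) auto
  finally show ?thesis by (simp add: mult_left_mono)
qed

lemma moments_tendsto_if_d_F_tendsto_0: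
  fixes Q :: "nat \<Rightarrow> 'a::euclidean_space measure"
  assumes q: "1 \<le> q" and P: "P \<in> P_class q" and Q: "\<And>n. Q n \<in> P_class q"
    and d: "(\<lambda>n. d_F q (Q n) P) \<longlonglongrightarrow> 0"
  shows "(\<lambda>n. \<integral>x. norm x powr q \<partial>Q n) \<longlonglongrightarrow> (\<integral>x. norm x powr q \<partial>P)"
proof -
  have q0: "0 < q" using q by simp
  have wc: "weak_conv Q P" by (rule weak_conv_if_d_F_tendsto_0[OF q P Q d])
  have profile_le: "moment_profile q (x \<bullet> b) \<le> moment_test q x" if "b \<in> Basis" for b x :: 'a
    unfolding moment_test_def moment_profile_def using that by (intro member_le_sum) auto
  have int_test: "integrable M (moment_test q)" if M: "M \<in> P_class q" for M :: "'a measure"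
  proof (rule P_class_integrable_dominated[OF M continuous_on_moment_test])
    fix x :: 'a
    show "\<bar>moment_test q x\<bar> \<le> DIM('a) * 2 powr (q / 2) + DIM('a) * 2 powr (q / 2) * norm x powr q"
      using moment_test_le[OF q0, of x] moment_test_nonneg[of q x] by simp
  qed
  have int: "integrable M (\<lambda>x. moment_profile q (x \<bullet> b))"
    if M: "M \<in> P_class q" and b: "b \<in> Basis" for M and b :: 'a
  proof (rule P_class_integrable_dominated[OF M])
    show "continuous_on UNIV (\<lambda>x. moment_profile q (x \<bullet> b))"
      unfolding moment_profile_def
      using one_plus_square_pos[THEN less_imp_neq, THEN not_sym] by (intro continuous_intros ballI)
    show "\<bar>moment_profile q (x \<bullet> b)\<bar> \<le> DIM('a) * 2 powr (q / 2) + DIM('a) * 2 powr (q / 2) * norm x powr q"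
      for x
      using profile_le[OF b, of x] moment_test_le[OF q0, of x] by (simp add: moment_profile_def)
  qed
  have "(\<lambda>n. \<Sum>b\<in>Basis. \<integral>x. moment_profile q (x \<bullet> b) \<partial>Q n) \<longlonglongrightarrow> (\<Sum>b\<in>Basis. \<integral>x. moment_profile q (x \<bullet> b) \<partial>P)"
    using integral_ridge_tendsto_if_d_F_tendsto_0[OF q P Q d ridge_profile_moment_profile[OF q]]
    by (intro tendsto_sum) (simp add: inner_commute)
  then have "(\<lambda>n. \<integral>x. moment_test q x \<partial>Q n) \<longlonglongrightarrow> (\<integral>x. moment_test q x \<partial>P)"
    unfolding moment_test_def using int[OF Q] int[OF P] by (simp add: integral_sum)
  then have "uniform_tails (moment_test q) Q P"
    using int_test[OF Q] int_test[OF P]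
    by (intro uniform_tails_if_integral_tendsto[OF P Q wc continuous_on_moment_test moment_test_nonneg])
  then show ?thesis
    using int_test[OF Q] int_test[OF P] norm_powr_le_moment_test[OF q0]
    by (intro integral_tendsto_if_dominated[OF P Q wc continuous_on_moment_test _ _ _ continuous_on_norm_powr[OF q0]])
       auto
qed

theorem mainTheorem1:
  fixes q :: real and P :: "'a::euclidean_space measure" and Q :: "nat \<Rightarrow> 'a measure"
  assumes "q \<ge> 1"
    and "P \<in> P_class q"
    and "\<And>n. Q n \<in> P_class q"
  shows "((\<lambda>n. d_F q (Q n) P) \<longlonglongrightarrow> 0) \<longleftrightarrow>
         (weak_conv Q P \<and>
          (\<lambda>n. \<integral>x. norm x powr q \<partial>Q n) \<longlonglongrightarrow> (\<integral>x. norm x powr q \<partial>P))"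
proof
  assume d: "(\<lambda>n. d_F q (Q n) P) \<longlonglongrightarrow> 0"
  show "weak_conv Q P \<and> (\<lambda>n. \<integral>x. norm x powr q \<partial>Q n) \<longlonglongrightarrow> (\<integral>x. norm x powr q \<partial>P)"
    using weak_conv_if_d_F_tendsto_0[OF assms d] moments_tendsto_if_d_F_tendsto_0[OF assms d] ..
next
  assume "weak_conv Q P \<and> (\<lambda>n. \<integral>x. norm x powr q \<partial>Q n) \<longlonglongrightarrow> (\<integral>x. norm x powr q \<partial>P)"
  then show "(\<lambda>n. d_F q (Q n) P) \<longlonglongrightarrow> 0"
    by (elim conjE) (rule d_F_tendsto_0_if_weak_conv_moments[OF assms])
qed

end
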